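(* Let $\mathcal P^0,\mathcal P^1$ be typical cyclic $6$-configurations, and let $p^i\in\mathcal P^i$ be a dominant point of $\mathcal P^i$, $i=0,1$. Then there is a continuous family $\mathcal P^t$, $t\in[0,1]$, of typical $6$-configurations connecting $\mathcal P^0$ to $\mathcal P^1$, together with a continuous choice of points $p^t\in\mathcal P^t$, such that $p^t$ equals $p^0$ at $t=0$ and $p^1$ at $t=1$.
   Context: A $6$-configuration is a set of $6$ distinct points in $\mathbb{RP}^2$; it is typical if no three of its points are collinear and all six points do not lie on a common conic. A simple $6$-configuration is cyclic (hexagonal) if there is a line $\ell$ disjoint from it such that its points are the vertices of a convex hexagon in the affine plane $\mathbb{RP}^2\smallsetminus\ell$. For $p\in\mathcal P$ let $Q_p$ be the conic through the five points of $\mathcal P\smallsetminus\{p\}$; "inside" $Q_p$ means the component of $\mathbb{RP}^2\smallsetminus Q_p$ homeomorphic to a disc. The point $p$ is dominant if it lies outside $Q_p$. *)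

theory Defs
  imports "HOL-Analysis.Analysis" "HOL-Library.Numeral_Type"
begin

text \<open>Points of RP^2 are represented by nonzero vectors of real^3; the projective
  point of v is its class of nonzero multiples.  A 6-configuration is represented
  by an (ordered) 6-tuple of representatives.\<close>

type_synonym config = "(real^3)^6"

definition proj_class :: "real^3 \<Rightarrow> (real^3) set" where
  "proj_class v = {c *\<^sub>R v | c. c \<noteq> 0}"

definition config_points :: "config \<Rightarrow> (real^3) set set" where
  "config_points P = proj_class ` range (\<lambda>i. P $ i)"

definition lin_dep3 :: "real^3 \<Rightarrow> real^3 \<Rightarrow> real^3 \<Rightarrow> bool" where
  "lin_dep3 u v w \<longleftrightarrow>
     (\<exists>a b c. (a, b, c) \<noteq> (0, 0, 0) \<and> a *\<^sub>R u + b *\<^sub>R v + c *\<^sub>R w = 0)"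

definition simple_config :: "config \<Rightarrow> bool" where
  "simple_config P \<longleftrightarrow>
     (\<forall>i. P $ i \<noteq> 0) \<and>
     (\<forall>i j. i \<noteq> j \<longrightarrow> proj_class (P $ i) \<noteq> proj_class (P $ j)) \<and>
     (\<forall>i j k. i \<noteq> j \<and> j \<noteq> k \<and> i \<noteq> k \<longrightarrow> \<not> lin_dep3 (P $ i) (P $ j) (P $ k))"

definition quad :: "real^3^3 \<Rightarrow> real^3 \<Rightarrow> real" where
  "quad A v = v \<bullet> (A *v v)"

definition on_common_conic :: "(real^3) set \<Rightarrow> bool" where
  "on_common_conic S \<longleftrightarrow>
     (\<exists>A :: real^3^3. transpose A = A \<and> A \<noteq> 0 \<and> (\<forall>v\<in>S. quad A v = 0))"

definition typical_config :: "config \<Rightarrow> bool" where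
  "typical_config P \<longleftrightarrow> simple_config P \<and> \<not> on_common_conic (range (\<lambda>i. P $ i))"

text \<open>Cyclic: some line {v. a \<bullet> v = 0} misses all points and, in the affine chart
  {v. a \<bullet> v = 1}, the points are in convex position (i.e. they are the vertices of a
  convex hexagon, the points being distinct with no three collinear).\<close>
definition cyclic_config :: "config \<Rightarrow> bool" where
  "cyclic_config P \<longleftrightarrow> simple_config P \<and>
     (\<exists>a :: real^3.
        (\<forall>i. a \<bullet> (P $ i) \<noteq> 0) \<and>
        (let aff = (\<lambda>i. (1 / (a \<bullet> (P $ i))) *\<^sub>R (P $ i))
         in \<forall>i. aff i \<notin> convex hull (aff ` (UNIV - {i}))))"

text \<open>A point (represented by v) lies outside the nondegenerate conic {quad A = 0}:
  it is off the conic and the component of its lift u in S^2 minus the cone of the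
  conic contains the antipode -u.  (The disc component of RP^2 minus the conic lifts
  to two disjoint antipodal discs; the Moebius-band component lifts to a connected
  annulus.)\<close>
definition outside_conic :: "real^3^3 \<Rightarrow> real^3 \<Rightarrow> bool" where
  "outside_conic A v \<longleftrightarrow>
     quad A v \<noteq> 0 \<and>
     (let u = (1 / norm v) *\<^sub>R v
      in - u \<in> connected_component_set (sphere 0 1 - {w. quad A w = 0}) u)"

definition dominant :: "config \<Rightarrow> 6 \<Rightarrow> bool" where
  "dominant P i \<longleftrightarrow>
     (\<exists>A :: real^3^3. transpose A = A \<and> A \<noteq> 0 \<and>
        (\<forall>j. j \<noteq> i \<longrightarrow> quad A (P $ j) = 0) \<and> outside_conic A (P $ i))"

end

(*
  Both configurations are deformed, through typical configurations, into members of an explicit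
  convex family of standard configurations, which are joined by straight lines in the parameters.
  Since P is cyclic, the five points other than the dominant point p can be ordered around p so
  that p_1, ..., p_5, p is a positively oriented convex hexagon. The conic through p_1, ..., p_5 is
  nondegenerate, so a positively oriented projective frame turns it into the parabola v2^2 = v1 v3,
  with p_2, p_3, p_4 at the parameters \<infinity>, 0, 1; the convexity of the hexagon places p_5 and p_1 at
  parameters 1 < s < t, and since p lies outside the conic it becomes a point below the parabola
  between the parameters s and t. Finally, positively oriented frames form a path connected set
  (elementary column operations and rotations by a quarter turn), and moving the frame along such a
  path keeps the configuration typical.
*)
theory Submission
  imports Defs
begin

section \<open>Determinants and projective frames\<close>

definition det3 :: "real^3 \<Rightarrow> real^3 \<Rightarrow> real^3 \<Rightarrow> real" where
  "det3 x y z = x$1 * (y$2 * z$3 - y$3 * z$2) - x$2 * (y$1 * z$3 - y$3 * z$1)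
     + x$3 * (y$1 * z$2 - y$2 * z$1)"

lemma det3_swap12: "det3 y x z = - det3 x y z"
  and det3_swap23: "det3 x z y = - det3 x y z"
  and det3_cycle: "det3 y z x = det3 x y z"
  by (simp_all add: det3_def algebra_simps)

lemma det3_scaleR:
  "det3 (r *\<^sub>R x) y z = r * det3 x y z" "det3 x (r *\<^sub>R y) z = r * det3 x y z"
  "det3 x y (r *\<^sub>R z) = r * det3 x y z"
  by (simp_all add: det3_def algebra_simps)

lemma det3_add:
  "det3 (x + x') y z = det3 x y z + det3 x' y z" "det3 x (y + y') z = det3 x y z + det3 x y' z"
  "det3 x y (z + z') = det3 x y z + det3 x y z'"
  by (simp_all add: det3_def algebra_simps)

lemma det3_diff:
  "det3 (x - x') y z = det3 x y z - det3 x' y z" "det3 x (y - y') z = det3 x y z - det3 x y' z"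
  "det3 x y (z - z') = det3 x y z - det3 x y z'"
  by (simp_all add: det3_def algebra_simps)

lemma det3_minus:
  "det3 (- x) y z = - det3 x y z" "det3 x (- y) z = - det3 x y z" "det3 x y (- z) = - det3 x y z"
  by (simp_all add: det3_def algebra_simps)

lemma det3_zero [simp]: "det3 0 y z = 0" "det3 x 0 z = 0" "det3 x y 0 = 0"
  by (simp_all add: det3_def)

lemma det3_same [simp]: "det3 x x z = 0" "det3 x z z = 0" "det3 x z x = 0"
  by (simp_all add: det3_def algebra_simps)

lemma det3_eq_det: "det3 x y z = det (vector [x, y, z] :: real^3^3)"
  by (simp add: det3_def det_3 algebra_simps)

lemma lin_dep3_iff_det3: "lin_dep3 u v w \<longleftrightarrow> det3 u v w = 0"
proof -
  define M where "M = transpose (vector [u, v, w] :: real^3^3)"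
  have comb: "M *v x = x$1 *\<^sub>R u + x$2 *\<^sub>R v + x$3 *\<^sub>R w" for x
    by (simp add: M_def vec_eq_iff forall_3 matrix_vector_mult_def transpose_def sum_3)
  have "lin_dep3 u v w \<longleftrightarrow> (\<exists>x. x \<noteq> 0 \<and> M *v x = 0)"
  proof
    assume "lin_dep3 u v w"
    then obtain a b c where "(a, b, c) \<noteq> (0, 0, 0)" "a *\<^sub>R u + b *\<^sub>R v + c *\<^sub>R w = 0"
      unfolding lin_dep3_def by blast
    then show "\<exists>x. x \<noteq> 0 \<and> M *v x = 0"
      by (intro exI[of _ "vector [a, b, c]"]) (auto simp: comb vec_eq_iff forall_3)
  next
    assume "\<exists>x. x \<noteq> 0 \<and> M *v x = 0"
    then obtain x where "x \<noteq> 0" "M *v x = 0" by blast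
    then show "lin_dep3 u v w" unfolding lin_dep3_def comb
      by (intro exI[of _ "x$1"] exI[of _ "x$2"] exI[of _ "x$3"]) (auto simp: vec_eq_iff forall_3)
  qed
  also have "\<dots> \<longleftrightarrow> \<not> invertible M"
    by (auto simp: invertible_left_inverse matrix_left_invertible_ker)
  also have "\<dots> \<longleftrightarrow> det3 u v w = 0"
    by (simp add: invertible_det_nz M_def det_transpose det3_eq_det)
  finally show ?thesis .
qed

lemma det3_cramer: "det3 a b c *\<^sub>R q = det3 q b c *\<^sub>R a + det3 a q c *\<^sub>R b + det3 a b q *\<^sub>R c"
  by (simp add: vec_eq_iff forall_3 det3_def algebra_simps)

definition frame_map :: "real^3 \<Rightarrow> real^3 \<Rightarrow> real^3 \<Rightarrow> real^3 \<Rightarrow> real^3" where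
  "frame_map a b c y = y$1 *\<^sub>R a + y$2 *\<^sub>R b + y$3 *\<^sub>R c"

definition frame_coords :: "real^3 \<Rightarrow> real^3 \<Rightarrow> real^3 \<Rightarrow> real^3 \<Rightarrow> real^3" where
  "frame_coords a b c q =
     vector [det3 q b c / det3 a b c, det3 a q c / det3 a b c, det3 a b q / det3 a b c]"

definition e1 :: "real^3" where "e1 = vector [1, 0, 0]"
definition e2 :: "real^3" where "e2 = vector [0, 1, 0]"
definition e3 :: "real^3" where "e3 = vector [0, 0, 1]"

lemma frame_map_coords:
  assumes "det3 a b c \<noteq> 0"
  shows "frame_map a b c (frame_coords a b c q) = q"
proof -
  have "det3 a b c *\<^sub>R frame_map a b c (frame_coords a b c q) = det3 a b c *\<^sub>R q"
    using assms
    by (simp add: frame_map_def frame_coords_def det3_cramer[of a b c q] scaleR_add_right)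
  then show ?thesis using assms by simp
qed

lemma frame_coords_map:
  assumes "det3 a b c \<noteq> 0"
  shows "frame_coords a b c (frame_map a b c y) = y"
proof -
  have "det3 (frame_map a b c y) b c = y$1 * det3 a b c"
    and "det3 a (frame_map a b c y) c = y$2 * det3 a b c"
    and "det3 a b (frame_map a b c y) = y$3 * det3 a b c"
    by (simp_all add: frame_map_def det3_def algebra_simps)
  then show ?thesis using assms by (simp add: frame_coords_def vec_eq_iff forall_3)
qed

lemma det3_frame_map:
  "det3 (frame_map a b c x) (frame_map a b c y) (frame_map a b c z) = det3 a b c * det3 x y z"
  by (simp add: frame_map_def det3_def algebra_simps)

lemma frame_map_scaleR: "frame_map a b c (r *\<^sub>R y) = r *\<^sub>R frame_map a b c y"
  by (simp add: frame_map_def algebra_simps)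

lemma frame_coords_scaleR: "frame_coords a b c (r *\<^sub>R q) = r *\<^sub>R frame_coords a b c q"
  by (simp add: frame_coords_def vec_eq_iff forall_3 det3_scaleR)

lemma continuous_on_vector3 [continuous_intros]:
  assumes "continuous_on S f" "continuous_on S g" "continuous_on S h"
  shows "continuous_on S (\<lambda>s. vector [f s, g s, h s] :: real^3)"
proof -
  have "(\<lambda>s. vector [f s, g s, h s] :: real^3) =
      (\<lambda>s. f s *\<^sub>R axis 1 1 + g s *\<^sub>R axis 2 1 + h s *\<^sub>R axis 3 1)"
    by (simp add: fun_eq_iff vec_eq_iff forall_3 axis_def)
  then show ?thesis by (simp only:) (intro continuous_intros assms)
qed

lemma continuous_on_frame_coords: "continuous_on S (frame_coords a b c)"
proof -
  have "frame_coords a b c = (\<lambda>q. (1 / det3 a b c) *\<^sub>R vector [det3 q b c, det3 a q c, det3 a b q])"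
    by (simp add: fun_eq_iff frame_coords_def vec_eq_iff forall_3)
  then show ?thesis unfolding det3_def by (simp only:) (intro continuous_intros)
qed

lemma proj_class_scaleR: "c \<noteq> 0 \<Longrightarrow> proj_class (c *\<^sub>R v) = proj_class v"
  unfolding proj_class_def
proof (intro set_eqI iffI; elim CollectE exE conjE)
  fix x d assume "c \<noteq> 0" "x = d *\<^sub>R c *\<^sub>R v" "d \<noteq> 0"
  then show "x \<in> {d *\<^sub>R v |d. d \<noteq> 0}" by (intro CollectI exI[of _ "d * c"]) simp
next
  fix x d assume "c \<noteq> 0" "x = d *\<^sub>R v" "d \<noteq> 0"
  then show "x \<in> {d *\<^sub>R c *\<^sub>R v |d. d \<noteq> 0}" by (intro CollectI exI[of _ "d / c"]) simp
qed

lemma proj_class_eqD: "proj_class u = proj_class v \<Longrightarrow> \<exists>c. c \<noteq> 0 \<and> u = c *\<^sub>R v"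
proof -
  assume "proj_class u = proj_class v"
  moreover have "u \<in> proj_class u" unfolding proj_class_def by (auto intro!: exI[of _ 1])
  ultimately show ?thesis unfolding proj_class_def by auto
qed

lemma typical_configI:
  fixes P :: config
  assumes det: "\<And>i j k. i \<noteq> j \<Longrightarrow> j \<noteq> k \<Longrightarrow> i \<noteq> k \<Longrightarrow> det3 (P$i) (P$j) (P$k) \<noteq> 0"
    and "\<not> on_common_conic (range (\<lambda>i. P$i))"
  shows "typical_config P"
proof -
  have other: "\<exists>k. k \<noteq> i \<and> k \<noteq> j" for i j :: 6
  proof -
    have "i + 1 \<noteq> i" "i + 2 \<noteq> i" "i + 1 \<noteq> i + 2" by (simp_all add: add.commute)
    then show ?thesis by metis
  qed
  have "P$i \<noteq> 0" for i
  proof -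
    obtain j where "j \<noteq> i" using other by blast
    moreover obtain k where "k \<noteq> i" "k \<noteq> j" using other by blast
    ultimately show ?thesis using det[of i j k] by auto
  qed
  moreover have "proj_class (P$i) \<noteq> proj_class (P$j)" if "i \<noteq> j" for i j
  proof
    assume "proj_class (P$i) = proj_class (P$j)"
    then obtain c where "P$i = c *\<^sub>R P$j" using proj_class_eqD by blast
    moreover obtain k where "k \<noteq> i" "k \<noteq> j" using other by blast
    ultimately show False using det[of i j k] that by (simp add: det3_scaleR det3_def algebra_simps)
  qed
  ultimately show ?thesis
    using assms unfolding typical_config_def simple_config_def lin_dep3_iff_det3 by blast
qed

lemma typical_config_det3:
  "typical_config P \<Longrightarrow> i \<noteq> j \<Longrightarrow> j \<noteq> k \<Longrightarrow> i \<noteq> k \<Longrightarrow> det3 (P$i) (P$j) (P$k) \<noteq> 0"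
  unfolding typical_config_def simple_config_def lin_dep3_iff_det3 by blast

section \<open>Conics in a frame\<close>

definition bilin :: "real^3^3 \<Rightarrow> real^3 \<Rightarrow> real^3 \<Rightarrow> real" where
  "bilin A x y = x \<bullet> (A *v y)"

lemma quad_eq_bilin: "quad A x = bilin A x x"
  by (simp add: quad_def bilin_def)

lemma bilin_linear:
  "bilin A (x + y) z = bilin A x z + bilin A y z" "bilin A x (y + z) = bilin A x y + bilin A x z"
  "bilin A (r *\<^sub>R x) z = r * bilin A x z" "bilin A x (r *\<^sub>R z) = r * bilin A x z"
  by (simp_all add: bilin_def inner_add_left inner_add_right matrix_vector_right_distrib
      matrix_vector_mult_scaleR)

lemma symmetric_matrix_entry: "transpose A = A \<Longrightarrow> A$i$j = A$j$i"
  by (metis transpose_def vec_lambda_beta)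

lemma bilin_commute:
  assumes "transpose A = A"
  shows "bilin A x y = bilin A y x"
  using symmetric_matrix_entry[OF assms, of 1 2] symmetric_matrix_entry[OF assms, of 1 3]
    symmetric_matrix_entry[OF assms, of 2 3]
  by (simp add: bilin_def inner_vec_def matrix_vector_mult_def sum_3 algebra_simps)

lemma bilin_frame_map:
  "bilin A (frame_map a b c y) (frame_map a b c z) =
     y$1*z$1*bilin A a a + y$1*z$2*bilin A a b + y$1*z$3*bilin A a c +
     y$2*z$1*bilin A b a + y$2*z$2*bilin A b b + y$2*z$3*bilin A b c +
     y$3*z$1*bilin A c a + y$3*z$2*bilin A c b + y$3*z$3*bilin A c c"
  by (simp add: frame_map_def bilin_linear algebra_simps)

definition frame_gram :: "real^3^3 \<Rightarrow> real^3 \<Rightarrow> real^3 \<Rightarrow> real^3 \<Rightarrow> real^3^3" where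
  "frame_gram A a b c =
     (\<chi> i j. bilin A ((vector [a, b, c] :: (real^3)^3) $ i) ((vector [a, b, c] :: (real^3)^3) $ j))"

lemma quad_frame_gram: "quad (frame_gram A a b c) y = quad A (frame_map a b c y)"
  unfolding quad_eq_bilin bilin_frame_map
  by (simp add: bilin_def frame_gram_def inner_vec_def matrix_vector_mult_def sum_3 algebra_simps)

lemma frame_gram_symmetric: "transpose A = A \<Longrightarrow> transpose (frame_gram A a b c) = frame_gram A a b c"
  by (simp add: frame_gram_def transpose_def vec_eq_iff bilin_commute)

lemma frame_gram_eq_0:
  assumes "det3 a b c \<noteq> 0" "frame_gram A a b c = 0"
  shows "A = 0"
proof -
  have "bilin A x z = 0" for x z
  proof -
    have "bilin A x z =
        bilin A (frame_map a b c (frame_coords a b c x)) (frame_map a b c (frame_coords a b c z))"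
      using frame_map_coords[OF assms(1)] by simp
    also have "\<dots> = 0"
      using assms(2) by (simp add: bilin_frame_map frame_gram_def vec_eq_iff forall_3)
    finally show ?thesis .
  qed
  then have "A *v z = 0" for z using bilin_def inner_eq_zero_iff by metis
  then show ?thesis by (metis matrix_eq matrix_vector_mult_0)
qed

lemma on_common_conic_frame_map:
  assumes "det3 a b c \<noteq> 0" "on_common_conic (frame_map a b c ` S)"
  shows "on_common_conic S"
proof -
  obtain A where A: "transpose A = A" "A \<noteq> 0" "\<forall>v\<in>S. quad A (frame_map a b c v) = 0"
    using assms(2) unfolding on_common_conic_def by blast
  show ?thesis unfolding on_common_conic_def
  proof (intro exI[of _ "frame_gram A a b c"] conjI)
    show "transpose (frame_gram A a b c) = frame_gram A a b c"
      using frame_gram_symmetric[OF A(1)] .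
    show "frame_gram A a b c \<noteq> 0" using frame_gram_eq_0[OF assms(1)] A(2) by blast
    show "\<forall>v\<in>S. quad (frame_gram A a b c) v = 0" using A(3) by (simp add: quad_frame_gram)
  qed
qed

definition frame_config :: "real^3 \<Rightarrow> real^3 \<Rightarrow> real^3 \<Rightarrow> config \<Rightarrow> config" where
  "frame_config a b c Y = (\<chi> l. frame_map a b c (Y$l))"

lemma typical_frame_config:
  assumes "typical_config Y" "det3 a b c \<noteq> 0"
  shows "typical_config (frame_config a b c Y)"
proof (rule typical_configI)
  show "det3 (frame_config a b c Y $ i) (frame_config a b c Y $ j) (frame_config a b c Y $ k) \<noteq> 0"
    if "i \<noteq> j" "j \<noteq> k" "i \<noteq> k" for i j k
    using assms typical_config_det3[OF assms(1) that] by (simp add: frame_config_def det3_frame_map)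
  have "range (\<lambda>l. frame_config a b c Y $ l) = frame_map a b c ` range (\<lambda>l. Y$l)"
    by (auto simp: frame_config_def)
  then show "\<not> on_common_conic (range (\<lambda>l. frame_config a b c Y $ l))"
    using assms on_common_conic_frame_map unfolding typical_config_def by metis
qed

lemma frame_config_std: "frame_config e1 e2 e3 Y = Y"
  by (simp add: frame_config_def frame_map_def e1_def e2_def e3_def vec_eq_iff forall_3)

section \<open>Connectedness of positively oriented frames\<close>

definition pos_frames :: "((real^3) \<times> (real^3) \<times> (real^3)) set" where
  "pos_frames = {(a, b, c). 0 < det3 a b c}"

lemma convex_comb_pos:
  fixes x y u :: real
  assumes "0 < x" "0 < y" "0 \<le> u" "u \<le> 1"
  shows "0 < (1 - u) * x + u * y"
  using assms by (cases "u = 1") (auto intro: add_pos_nonneg)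

lemma pos_frames_move:
  assumes "0 < det3 a b c" "0 < det3 a' b' c'"
    and "(b = b' \<and> c = c') \<or> (a = a' \<and> c = c') \<or> (a = a' \<and> b = b')"
  shows "path_component pos_frames (a, b, c) (a', b', c')"
proof (rule path_component_linepath, rule subsetI)
  fix x assume "x \<in> closed_segment (a, b, c) (a', b', c')"
  then obtain u where u: "0 \<le> u" "u \<le> 1"
    and x: "x = ((1 - u) *\<^sub>R a + u *\<^sub>R a', (1 - u) *\<^sub>R b + u *\<^sub>R b', (1 - u) *\<^sub>R c + u *\<^sub>R c')"
    by (auto simp: closed_segment_def)
  have fix_same: "(1 - u) *\<^sub>R v + u *\<^sub>R v = v" for v :: "real^3"
    by (simp add: scaleR_left_distrib[symmetric])
  have "det3 ((1 - u) *\<^sub>R a + u *\<^sub>R a') ((1 - u) *\<^sub>R b + u *\<^sub>R b') ((1 - u) *\<^sub>R c + u *\<^sub>R c')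
      = (1 - u) * det3 a b c + u * det3 a' b' c'"
    using assms(3) by (elim disjE conjE) (simp_all add: fix_same det3_add det3_scaleR)
  then show "x \<in> pos_frames"
    using convex_comb_pos[OF assms(1,2) u] by (simp add: x pos_frames_def)
qed

lemma path_component_continuous_image:
  assumes "path_component S x y" "continuous_on S f" "f ` S \<subseteq> T"
  shows "path_component T (f x) (f y)"
proof -
  obtain g where g: "path g" "path_image g \<subseteq> S" "pathstart g = x" "pathfinish g = y"
    using assms(1) unfolding path_component_def by blast
  have "path (f \<circ> g)"
    using g(1,2) continuous_on_subset[OF assms(2)] unfolding path_def path_image_def
    by (intro continuous_on_compose) auto
  moreover have "path_image (f \<circ> g) \<subseteq> T" using g(2) assms(3) by (auto simp: path_image_def)
  ultimately show ?thesis
    using g(3,4) unfolding path_component_def by (auto simp: pathstart_def pathfinish_def)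
qed

lemma pos_frames_cycle:
  assumes "path_component pos_frames (a, b, c) (a', b', c')"
  shows "path_component pos_frames (b, c, a) (b', c', a')"
proof -
  define f :: "(real^3) \<times> (real^3) \<times> (real^3) \<Rightarrow> _"
    where "f v = (fst (snd v), snd (snd v), fst v)" for v
  have "continuous_on pos_frames f" unfolding f_def by (intro continuous_intros)
  moreover have "f ` pos_frames \<subseteq> pos_frames" by (auto simp: f_def pos_frames_def det3_cycle)
  ultimately have "path_component pos_frames (f (a, b, c)) (f (a', b', c'))"
    by (rule path_component_continuous_image[OF assms])
  then show ?thesis by (simp add: f_def)
qed

declare path_component_trans [trans]

lemma pos_frames_flip:
  assumes "0 < det3 a b c"
  shows "path_component pos_frames (a, b, c) (- a, - b, c)"
    and "path_component pos_frames (a, b, c) (- a, b, - c)"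
    and "path_component pos_frames (a, b, c) (a, - b, - c)"
proof -
  have quarter_turn: "path_component pos_frames (x, y, z) (- y, x, z)" if "0 < det3 x y z" for x y z
  proof -
    have "path_component pos_frames (x, y, z) (x, y + x, z)"
      using that by (intro pos_frames_move) (simp_all add: det3_add)
    also have "path_component pos_frames \<dots> (- y, y + x, z)"
      using that by (intro pos_frames_move) (simp_all add: det3_add det3_minus det3_swap12[of y x])
    also have "path_component pos_frames \<dots> (- y, x, z)"
      using that by (intro pos_frames_move) (simp_all add: det3_add det3_minus det3_swap12[of y x])
    finally show ?thesis .
  qed
  have half_turn: "path_component pos_frames (x, y, z) (- x, - y, z)" if "0 < det3 x y z" for x y z
  proof -
    have "path_component pos_frames (x, y, z) (- y, x, z)" using quarter_turn that by blast
    also have "path_component pos_frames \<dots> (- x, - y, z)"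
      using quarter_turn[of "- y" x] that by (simp add: det3_minus det3_swap12[of x y])
    finally show ?thesis .
  qed
  show "path_component pos_frames (a, b, c) (- a, - b, c)" using half_turn assms .
  show "path_component pos_frames (a, b, c) (- a, b, - c)"
    using pos_frames_cycle[OF half_turn[of c a b]] assms by (simp add: det3_cycle)
  show "path_component pos_frames (a, b, c) (a, - b, - c)"
    using pos_frames_cycle[OF pos_frames_cycle[OF half_turn[of b c a]]] assms
    by (simp add: det3_cycle)
qed

lemma det3_diag: "det3 (x *\<^sub>R e1) (y *\<^sub>R e2) (z *\<^sub>R e3) = x * y * z"
  by (simp add: det3_def e1_def e2_def e3_def)

lemma pos_frames_diag:
  assumes "0 < x * y * z"
  shows "path_component pos_frames (x *\<^sub>R e1, y *\<^sub>R e2, z *\<^sub>R e3) (e1, e2, e3)"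
proof -
  have positive: "path_component pos_frames (x *\<^sub>R e1, y *\<^sub>R e2, z *\<^sub>R e3) (e1, e2, e3)"
    if "0 < x" "0 < y" "0 < z" for x y z
  proof -
    have "path_component pos_frames (x *\<^sub>R e1, y *\<^sub>R e2, z *\<^sub>R e3) (1 *\<^sub>R e1, y *\<^sub>R e2, z *\<^sub>R e3)"
      using that by (intro pos_frames_move) (simp_all del: scaleR_one add: det3_diag)
    also have "path_component pos_frames \<dots> (1 *\<^sub>R e1, 1 *\<^sub>R e2, z *\<^sub>R e3)"
      using that by (intro pos_frames_move) (simp_all del: scaleR_one add: det3_diag)
    also have "path_component pos_frames \<dots> (1 *\<^sub>R e1, 1 *\<^sub>R e2, 1 *\<^sub>R e3)"
      using that by (intro pos_frames_move) (simp_all del: scaleR_one add: det3_diag)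
    finally show ?thesis by simp
  qed
  have det: "0 < det3 (x *\<^sub>R e1) (y *\<^sub>R e2) (z *\<^sub>R e3)" using assms by (simp add: det3_diag)
  consider "0 < x" "0 < y" "0 < z" | "x < 0" "y < 0" "0 < z" | "x < 0" "0 < y" "z < 0"
    | "0 < x" "y < 0" "z < 0"
    using assms by (cases "0 < x"; cases "0 < y"; cases "0 < z")
      (auto simp: zero_less_mult_iff mult_less_0_iff)
  then show ?thesis
  proof cases
    case 1
    then show ?thesis using positive by blast
  next
    case 2
    have "path_component pos_frames (x *\<^sub>R e1, y *\<^sub>R e2, z *\<^sub>R e3)
        ((- x) *\<^sub>R e1, (- y) *\<^sub>R e2, z *\<^sub>R e3)"
      using pos_frames_flip(1)[OF det] by simp
    then show ?thesis using path_component_trans positive[of "- x" "- y" z] 2 by auto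
  next
    case 3
    have "path_component pos_frames (x *\<^sub>R e1, y *\<^sub>R e2, z *\<^sub>R e3)
        ((- x) *\<^sub>R e1, y *\<^sub>R e2, (- z) *\<^sub>R e3)"
      using pos_frames_flip(2)[OF det] by simp
    then show ?thesis using path_component_trans positive[of "- x" y "- z"] 3 by auto
  next
    case 4
    have "path_component pos_frames (x *\<^sub>R e1, y *\<^sub>R e2, z *\<^sub>R e3)
        (x *\<^sub>R e1, (- y) *\<^sub>R e2, (- z) *\<^sub>R e3)"
      using pos_frames_flip(3)[OF det] by simp
    then show ?thesis using path_component_trans positive[of x "- y" "- z"] 4 by auto
  qed
qed

lemma pos_frames_triangular:
  assumes "0 < det3 a b c" "b$1 = 0" "c$1 = 0" "c$2 = 0"
  shows "path_component pos_frames (a, b, c) (e1, e2, e3)"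
proof -
  have det: "det3 a b c = a$1 * b$2 * c$3" using assms(2-4) by (simp add: det3_def)
  then have "c$3 \<noteq> 0" "b$2 \<noteq> 0" using assms(1) by auto
  define a' where "a' = a - (a$3 / c$3) *\<^sub>R c"
  define b' where "b' = b - (b$3 / c$3) *\<^sub>R c"
  define a'' where "a'' = a' - (a'$2 / b'$2) *\<^sub>R b'"
  have "path_component pos_frames (a, b, c) (a', b, c)"
    using assms(1) by (intro pos_frames_move) (simp_all add: a'_def det3_diff det3_scaleR)
  also have "path_component pos_frames \<dots> (a', b', c)"
    using assms(1) by (intro pos_frames_move) (simp_all add: a'_def b'_def det3_diff det3_scaleR)
  also have "path_component pos_frames \<dots> (a'', b', c)"
    using assms(1)
    by (intro pos_frames_move) (simp_all add: a''_def a'_def b'_def det3_diff det3_scaleR)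
  also have "(a'', b', c) = ((a$1) *\<^sub>R e1, (b$2) *\<^sub>R e2, (c$3) *\<^sub>R e3)"
    using assms(2-4) \<open>c$3 \<noteq> 0\<close> \<open>b$2 \<noteq> 0\<close>
    by (simp add: a''_def a'_def b'_def vec_eq_iff forall_3 e1_def e2_def e3_def)
  also have "path_component pos_frames \<dots> (e1, e2, e3)"
    using assms(1) det by (intro pos_frames_diag) simp
  finally show ?thesis .
qed

lemma pos_frames_clear_second_row:
  assumes "0 < det3 a b c" "b$1 = 0" "c$1 = 0"
  obtains b' c' where "path_component pos_frames (a, b, c) (a, b', c')"
    "b'$1 = 0" "c'$1 = 0" "c'$2 = 0"
proof -
  have det: "det3 a b c = a$1 * (b$2 * c$3 - b$3 * c$2)" using assms(2,3) by (simp add: det3_def)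
  obtain b' where b': "path_component pos_frames (a, b, c) (a, b', c)" "b'$1 = 0" "b'$2 \<noteq> 0"
  proof (cases "b$2 = 0")
    case True
    then have "c$2 \<noteq> 0" using assms(1) det by auto
    moreover have "path_component pos_frames (a, b, c) (a, b + c, c)"
      using assms(1) by (intro pos_frames_move) (simp_all add: det3_add)
    ultimately show ?thesis using that[of "b + c"] assms(2,3) True by simp
  next
    case False
    then show ?thesis using that[of b] assms by (simp add: path_component_refl pos_frames_def)
  qed
  define c' where "c' = c - (c$2 / b'$2) *\<^sub>R b'"
  have "0 < det3 a b' c" using path_component_mem(2)[OF b'(1)] by (simp add: pos_frames_def)
  then have "path_component pos_frames (a, b', c) (a, b', c')"
    by (intro pos_frames_move) (simp_all add: c'_def det3_diff det3_scaleR)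
  moreover have "c'$1 = 0" "c'$2 = 0" using b'(2,3) assms(3) by (simp_all add: c'_def)
  ultimately show ?thesis using that b'(2) path_component_trans[OF b'(1)] by blast
qed

lemma pos_frames_clear_first_row:
  assumes "0 < det3 a b c"
  obtains a' b' c' where "path_component pos_frames (a, b, c) (a', b', c')" "b'$1 = 0" "c'$1 = 0"
proof -
  obtain a' where a': "path_component pos_frames (a, b, c) (a', b, c)" "a'$1 \<noteq> 0"
  proof -
    consider "a$1 \<noteq> 0" | "b$1 \<noteq> 0" "a$1 = 0" | "c$1 \<noteq> 0" "a$1 = 0"
      using assms by (force simp: det3_def)
    then show ?thesis
    proof cases
      case 1
      then show ?thesis using that[of a] assms by (simp add: path_component_refl pos_frames_def)
    next
      case 2
      then show ?thesis using that[of "a + b"] assms by (simp add: pos_frames_move det3_add)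
    next
      case 3
      then show ?thesis using that[of "a + c"] assms by (simp add: pos_frames_move det3_add)
    qed
  qed
  define b' where "b' = b - (b$1 / a'$1) *\<^sub>R a'"
  define c' where "c' = c - (c$1 / a'$1) *\<^sub>R a'"
  have "0 < det3 a' b c" using path_component_mem(2)[OF a'(1)] by (simp add: pos_frames_def)
  then have "path_component pos_frames (a', b, c) (a', b', c')"
    using path_component_trans[OF pos_frames_move pos_frames_move, of a' b c a' b' c a' b' c']
    by (simp add: b'_def c'_def det3_diff det3_scaleR)
  moreover have "b'$1 = 0" "c'$1 = 0" using a'(2) by (simp_all add: b'_def c'_def)
  ultimately show ?thesis using that path_component_trans[OF a'(1)] by blast
qed

lemma pos_frames_connected_std:
  assumes "0 < det3 a b c"
  shows "path_component pos_frames (a, b, c) (e1, e2, e3)"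
proof -
  obtain a' b' c' where 1: "path_component pos_frames (a, b, c) (a', b', c')" "b'$1 = 0" "c'$1 = 0"
    using pos_frames_clear_first_row[OF assms] by blast
  have "0 < det3 a' b' c'" using path_component_mem(2)[OF 1(1)] by (simp add: pos_frames_def)
  then obtain b'' c'' where 2: "path_component pos_frames (a', b', c') (a', b'', c'')"
    "b''$1 = 0" "c''$1 = 0" "c''$2 = 0"
    using pos_frames_clear_second_row 1(2,3) by blast
  have "0 < det3 a' b'' c''" using path_component_mem(2)[OF 2(1)] by (simp add: pos_frames_def)
  then show ?thesis
    using path_component_trans[OF path_component_trans[OF 1(1) 2(1)] pos_frames_triangular] 2(2-4)
    by blast
qed

lemma typical_frame_config_connected:
  assumes "0 < det3 a b c" "typical_config Y"
  shows "path_component {P. typical_config P} (frame_config a b c Y) Y"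
proof -
  define f where "f v = frame_config (fst v) (fst (snd v)) (snd (snd v)) Y" for v
  have "continuous_on pos_frames f"
    unfolding f_def frame_config_def frame_map_def
    by (intro continuous_on_vec_lambda continuous_intros)
  moreover have "f ` pos_frames \<subseteq> {P. typical_config P}"
    using assms(2) by (auto simp: f_def pos_frames_def intro!: typical_frame_config)
  ultimately have "path_component {P. typical_config P} (f (a, b, c)) (f (e1, e2, e3))"
    by (rule path_component_continuous_image[OF pos_frames_connected_std[OF assms(1)]])
  then show ?thesis by (simp add: f_def frame_config_std)
qed

section \<open>Standard configurations\<close>

lemma UNIV_6: "(UNIV :: 6 set) = {0, 1, 2, 3, 4, 5}"
proof -
  have "card {0, 1, 2, 3, 4, 5 :: 6} = 6" by simp
  then show ?thesis using card_subset_eq[of UNIV "{0, 1, 2, 3, 4, 5 :: 6}"] by simp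
qed

lemma forall_6: "(\<forall>i :: 6. P i) \<longleftrightarrow> P 0 \<and> P 1 \<and> P 2 \<and> P 3 \<and> P 4 \<and> P 5"
  by (metis UNIV_I UNIV_6 insertE singletonD)

text \<open>Taken in the cyclic order 1, 2, 3, 4, 5, 0, the points are the vertices of a positively
  oriented convex hexagon: every triangle of vertices listed in this order is positively oriented.\<close>
definition hexagon_positive :: "config \<Rightarrow> bool" where
  "hexagon_positive Y \<longleftrightarrow>
     (\<forall>(i, j, k) \<in> {(1, 2, 3), (1, 2, 4), (1, 2, 5), (1, 3, 4), (1, 3, 5), (1, 4, 5), (2, 3, 4),
        (2, 3, 5), (2, 4, 5), (3, 4, 5), (1, 2, 0), (1, 3, 0), (1, 4, 0), (1, 5, 0), (2, 3, 0),
        (2, 4, 0), (2, 5, 0), (3, 4, 0), (3, 5, 0), (4, 5, 0)}. 0 < det3 (Y$i) (Y$j) (Y$k))"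

lemma hexagon_positive_det3_nonzero:
  assumes "hexagon_positive Y" "i \<noteq> j" "j \<noteq> k" "i \<noteq> k"
  shows "det3 (Y$i) (Y$j) (Y$k) \<noteq> 0"
proof -
  have perm: "det3 y x z \<noteq> 0" "det3 x z y \<noteq> 0" "det3 y z x \<noteq> 0" "det3 z x y \<noteq> 0"
    "det3 z y x \<noteq> 0" if "0 < det3 x y z" for x y z
    using that by (simp_all add: det3_def algebra_simps)
  have "\<forall>i j k. i \<noteq> j \<and> j \<noteq> k \<and> i \<noteq> k \<longrightarrow> det3 (Y$i) (Y$j) (Y$k) \<noteq> 0"
    using assms(1) unfolding forall_6 hexagon_positive_def
    by (simp add: less_imp_neq[symmetric] perm)
  then show ?thesis using assms(2-4) by blast
qed

definition parabola_pt :: "real \<Rightarrow> real^3" where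
  "parabola_pt t = vector [1, t, t^2]"

text \<open>Points 2, 3, 4, 5, 1 lie on the conic v2^2 = v1 v3 at the parameters \<infinity>, 0, 1, s, t of
  parabola_pt. In the chart v1 = 1, where the conic is the parabola v3 = v2^2, point 0 lies below
  the parabola at abscissa x: on the parabola for \<rho> = 0, on the chord through the parameters 1
  and s for \<rho> = 1.\<close>
definition std_config :: "real \<Rightarrow> real \<Rightarrow> real \<Rightarrow> real \<Rightarrow> config" where
  "std_config s t x \<rho> =
     (\<chi> l. if l = 1 then parabola_pt t else if l = 2 then e3 else if l = 3 then e1
       else if l = 4 then parabola_pt 1 else if l = 5 then parabola_pt s
       else vector [1, x, x^2 - \<rho> * ((x - 1) * (x - s))])"

definition std_params :: "real \<Rightarrow> real \<Rightarrow> real \<Rightarrow> real \<Rightarrow> bool" where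
  "std_params s t x \<rho> \<longleftrightarrow> 1 < s \<and> s < x \<and> x < t \<and> 0 < \<rho> \<and> \<rho> < 1"

lemma std_config_nth [simp]:
  "std_config s t x \<rho> $ 1 = parabola_pt t" "std_config s t x \<rho> $ 2 = e3"
  "std_config s t x \<rho> $ 3 = e1" "std_config s t x \<rho> $ 4 = parabola_pt 1"
  "std_config s t x \<rho> $ 5 = parabola_pt s"
  "std_config s t x \<rho> $ 0 = vector [1, x, x^2 - \<rho> * ((x - 1) * (x - s))]"
  by (simp_all add: std_config_def)

lemma det3_parabola_points:
  "det3 (parabola_pt t) e3 e1 = t" "det3 (parabola_pt t) e3 (parabola_pt 1) = t - 1"
  "det3 (parabola_pt t) e3 (parabola_pt s) = t - s"
  "det3 (parabola_pt t) e1 (parabola_pt 1) = t * (t - 1)"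
  "det3 (parabola_pt t) e1 (parabola_pt s) = t * s * (t - s)"
  "det3 (parabola_pt t) (parabola_pt 1) (parabola_pt s) = (t - 1) * (t - s) * (s - 1)"
  "det3 e3 e1 (parabola_pt 1) = 1" "det3 e3 e1 (parabola_pt s) = s"
  "det3 e3 (parabola_pt 1) (parabola_pt s) = s - 1"
  "det3 e1 (parabola_pt 1) (parabola_pt s) = s * (s - 1)"
  by (simp_all add: det3_def parabola_pt_def e1_def e3_def power2_eq_square algebra_simps)

lemma hexagon_positive_std_config:
  assumes "std_params s t x \<rho>"
  shows "hexagon_positive (std_config s t x \<rho>)"
proof -
  define D where "D = \<rho> * ((x - 1) * (x - s))"
  let ?w = "vector [1, x, x^2 - D] :: real^3"
  have params: "1 < s" "s < x" "x < t" "0 < \<rho>" "\<rho> < 1"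
    using assms by (simp_all add: std_params_def)
  then have "0 < (x - 1) * (x - s)" by simp
  then have "0 < D" "D < (x - 1) * (x - s)"
    using params mult_strict_right_mono[of \<rho> 1] by (simp_all add: D_def)
  note p = params(1-3) this
  have "(x - 1) * (x - s) < x * (x - 1)" "(x - 1) * (x - s) < x * (x - s)"
    using p by (simp_all add: mult_strict_right_mono mult.commute[of "x - 1"])
  then have q: "0 < x * (x - 1) - D" "0 < x * (x - s) - D" using p(5) by linarith+
  have "0 < D + x * (t - x)" "0 < D + (t - x) * (x - 1)" "0 < D + (t - x) * (x - s)"
    using p by (simp_all add: add_pos_pos)
  moreover have
    "det3 (parabola_pt t) e3 ?w = t - x" "det3 (parabola_pt t) e1 ?w = t * (D + x * (t - x))"
    "det3 (parabola_pt t) (parabola_pt 1) ?w = (t - 1) * (D + (t - x) * (x - 1))"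
    "det3 (parabola_pt t) (parabola_pt s) ?w = (t - s) * (D + (t - x) * (x - s))"
    "det3 e3 e1 ?w = x" "det3 e3 (parabola_pt 1) ?w = x - 1" "det3 e3 (parabola_pt s) ?w = x - s"
    "det3 e1 (parabola_pt 1) ?w = x * (x - 1) - D" "det3 e1 (parabola_pt s) ?w = s * (x * (x - s) - D)"
    "det3 (parabola_pt 1) (parabola_pt s) ?w = (s - 1) * ((x - 1) * (x - s) - D)"
    by (simp_all add: det3_def parabola_pt_def e1_def e3_def power2_eq_square algebra_simps)
  ultimately show ?thesis
    using p q by (simp add: hexagon_positive_def det3_parabola_points D_def[symmetric])
qed

lemma bilin_eq_0_imp_zero: "(\<And>x y. bilin A x y = 0) \<Longrightarrow> A = 0"
  by (metis bilin_def inner_eq_zero_iff matrix_eq matrix_vector_mult_0)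

lemma quad_eq_0_imp_zero:
  assumes "transpose A = A" "\<And>v. quad A v = 0"
  shows "A = 0"
proof (rule bilin_eq_0_imp_zero)
  fix x y
  have "quad A (x + y) = quad A x + 2 * bilin A x y + quad A y"
    using bilin_commute[OF assms(1), of y x] by (simp add: quad_eq_bilin bilin_linear)
  then show "bilin A x y = 0" using assms(2) by simp
qed

lemma quad_through_parabola_points:
  assumes "transpose A = A" and "quad A e1 = 0" "quad A e3 = 0" "quad A (parabola_pt 1) = 0"
    "quad A (parabola_pt s) = 0" "quad A (parabola_pt t) = 0"
    and "s \<noteq> 0" "t \<noteq> 0" "s \<noteq> 1" "t \<noteq> 1" "s \<noteq> t"
  shows "quad A v = 2 * A$1$3 * (v$1 * v$3 - v$2 * v$2)"
proof -
  have sym: "A$i$j = A$j$i" for i j using symmetric_matrix_entry[OF assms(1)] .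
  have quad3: "quad A (vector [p, q, r]) = A$1$1*p*p + A$2$2*q*q + A$3$3*r*r + 2*A$1$2*p*q
      + 2*A$1$3*p*r + 2*A$2$3*q*r" for p q r
    by (simp add: quad_def inner_vec_def matrix_vector_mult_def sum_3 sym[of 2 1] sym[of 3 1]
        sym[of 3 2] algebra_simps)
  have a11: "A$1$1 = 0" and a33: "A$3$3 = 0" using assms(2,3) by (simp_all add: e1_def e3_def quad3)
  define g where "g u = 2*A$1$2 + (A$2$2 + 2*A$1$3)*u + 2*A$2$3*u*u" for u
  have quad_pt: "quad A (parabola_pt u) = u * g u" for u
    by (simp add: parabola_pt_def quad3 a11 a33 g_def power2_eq_square algebra_simps)
  have "g 1 = 0" "g s = 0" "g t = 0"
    using assms(4-8) quad_pt[of 1] quad_pt[of s] quad_pt[of t] by simp_all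
  text \<open>g is a quadratic polynomial with three distinct roots.\<close>
  then have "(s - 1) * ((A$2$2 + 2*A$1$3) + 2*A$2$3*(s + 1)) = 0"
    "(t - 1) * ((A$2$2 + 2*A$1$3) + 2*A$2$3*(t + 1)) = 0"
    by (simp_all add: g_def algebra_simps)
  then have lin: "(A$2$2 + 2*A$1$3) + 2*A$2$3*(s + 1) = 0" "(A$2$2 + 2*A$1$3) + 2*A$2$3*(t + 1) = 0"
    using assms(9,10) by simp_all
  then have "2*A$2$3*(t + 1) = 2*A$2$3*(s + 1)" by linarith
  then have a23: "A$2$3 = 0" using assms(11) by simp
  then have a22: "A$2$2 = - 2*A$1$3" using lin by simp
  have a12: "A$1$2 = 0" using \<open>g 1 = 0\<close> a23 a22 by (simp add: g_def)
  have "vector [v$1, v$2, v$3] = v" by (simp add: vec_eq_iff forall_3)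
  then have "quad A v = quad A (vector [v$1, v$2, v$3])" by simp
  also have "\<dots> = 2 * A$1$3 * (v$1 * v$3 - v$2 * v$2)"
    unfolding quad3 a11 a22 a33 a12 a23 by (simp add: algebra_simps)
  finally show ?thesis .
qed

lemma std_config_not_on_conic:
  assumes "std_params s t x \<rho>"
  shows "\<not> on_common_conic (range (\<lambda>l. std_config s t x \<rho> $ l))"
proof
  assume "on_common_conic (range (\<lambda>l. std_config s t x \<rho> $ l))"
  then obtain A where A: "transpose A = A" "A \<noteq> 0" "\<And>l. quad A (std_config s t x \<rho> $ l) = 0"
    unfolding on_common_conic_def by blast
  have p: "1 < s" "s < x" "x < t" "0 < \<rho>" using assms unfolding std_params_def by auto
  have form: "quad A v = 2 * A$1$3 * (v$1 * v$3 - v$2 * v$2)" for v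
    using A(3)[of 1] A(3)[of 2] A(3)[of 3] A(3)[of 4] A(3)[of 5] p
    by (intro quad_through_parabola_points[of A s t] A(1)) simp_all
  have "quad A (std_config s t x \<rho> $ 0) = - 2 * A$1$3 * (\<rho> * ((x - 1) * (x - s)))"
    unfolding form by (simp add: power2_eq_square algebra_simps)
  then have "A$1$3 = 0" using A(3)[of 0] p by simp
  then have "A = 0" using form by (intro quad_eq_0_imp_zero A(1)) simp
  then show False using A(2) by simp
qed

lemma typical_std_config: "std_params s t x \<rho> \<Longrightarrow> typical_config (std_config s t x \<rho>)"
  by (intro typical_configI hexagon_positive_det3_nonzero hexagon_positive_std_config
      std_config_not_on_conic)

lemma std_params_convex:
  assumes "std_params s t x \<rho>" "std_params s' t' x' \<rho>'" "0 \<le> u" "u \<le> 1"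
  shows "std_params ((1 - u) * s + u * s') ((1 - u) * t + u * t') ((1 - u) * x + u * x')
    ((1 - u) * \<rho> + u * \<rho>')"
proof -
  have less: "(1 - u) * a + u * a' < (1 - u) * b + u * b'" if "a < b" "a' < b'" for a a' b b' :: real
    using convex_comb_pos[of "b - a" "b' - a'" u] that assms(3,4) by (simp add: algebra_simps)
  show ?thesis
    using assms less[of 1 s 1 s'] less[of s x s' x'] less[of x t x' t'] less[of 0 \<rho> 0 \<rho>']
      less[of \<rho> 1 \<rho>' 1]
    unfolding std_params_def by (simp add: algebra_simps)
qed

lemma std_configs_connected:
  assumes "std_params s t x \<rho>" "std_params s' t' x' \<rho>'"
  shows "path_component {P. typical_config P} (std_config s t x \<rho>) (std_config s' t' x' \<rho>')"
proof -
  define S where "S = {(s, t, x, \<rho>). std_params s t x \<rho>}"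
  define f
    where "f p = std_config (fst p) (fst (snd p)) (fst (snd (snd p))) (snd (snd (snd p)))"
    for p :: "real \<times> real \<times> real \<times> real"
  have if_cont: "continuous_on S (\<lambda>p. if P then g p else h p)"
    if "continuous_on S g" "continuous_on S h" for P and g h :: "_ \<Rightarrow> real^3"
    using that by (cases P) simp_all
  have "closed_segment (s, t, x, \<rho>) (s', t', x', \<rho>') \<subseteq> S"
    using std_params_convex[OF assms] by (auto simp: S_def closed_segment_def)
  then have "path_component S (s, t, x, \<rho>) (s', t', x', \<rho>')" by (rule path_component_linepath)
  moreover have "continuous_on S f"
    unfolding f_def std_config_def parabola_pt_def
    by (intro continuous_on_vec_lambda if_cont continuous_intros)
  moreover have "f ` S \<subseteq> {P. typical_config P}" by (auto simp: S_def f_def typical_std_config)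
  ultimately have "path_component {P. typical_config P} (f (s, t, x, \<rho>)) (f (s', t', x', \<rho>'))"
    by (rule path_component_continuous_image)
  then show ?thesis by (simp add: f_def)
qed

section \<open>Ordering a convex hexagon around a vertex\<close>

lemma sorted_list_of_strict_total_order:
  assumes "finite U"
    and trans: "\<And>x y z. x \<in> U \<Longrightarrow> y \<in> U \<Longrightarrow> z \<in> U \<Longrightarrow> R x y \<Longrightarrow> R y z \<Longrightarrow> R x z"
    and total: "\<And>x y. x \<in> U \<Longrightarrow> y \<in> U \<Longrightarrow> x \<noteq> y \<Longrightarrow> R x y \<or> R y x"
    and irrefl: "\<And>x. \<not> R x x"
  obtains xs where "set xs = U" "distinct xs" "sorted_wrt R xs"
proof -
  have "finite V \<Longrightarrow> V \<subseteq> U \<Longrightarrow> \<exists>xs. set xs = V \<and> distinct xs \<and> sorted_wrt R xs" for V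
  proof (induction V rule: finite_induct)
    case empty
    then show ?case by simp
  next
    case (insert x V)
    then obtain xs where xs: "set xs = V" "distinct xs" "sorted_wrt R xs" by auto
    define ys where "ys = filter (\<lambda>y. R y x) xs @ [x] @ filter (\<lambda>y. R x y) xs"
    have "set ys = insert x V"
      using xs(1) insert.hyps(2) insert.prems total by (auto simp: ys_def)
    moreover have "\<not> (R a x \<and> R x a)" if "a \<in> V" for a
      using trans[of a x a] irrefl insert.prems that by auto
    then have "distinct ys" using xs(1,2) insert.hyps(2) by (auto simp: ys_def)
    moreover have "R a b"
      if "a \<in> set (filter (\<lambda>y. R y x) xs)" "b \<in> set (filter (\<lambda>y. R x y) xs)" for a b
      using that trans[of a x b] insert.prems xs(1) by auto
    then have "sorted_wrt R ys"
      using xs(3) by (auto simp: ys_def sorted_wrt_append intro: sorted_wrt_filter)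
    ultimately show ?case by blast
  qed
  then show ?thesis using assms(1) that by blast
qed

lemma det3_inner_identity:
  "det3 y z q * (g \<bullet> x) - det3 x z q * (g \<bullet> y) + det3 x y q * (g \<bullet> z) - det3 x y z * (g \<bullet> q) = 0"
  by (simp add: det3_def inner_vec_def sum_3 algebra_simps)

text \<open>Seen from a point q on the boundary line of the half-plane g \<bullet> x > 0, the points of this
  half-plane are linearly ordered by the sign of det3 q x y.\<close>
lemma pencil_order_trans:
  assumes "g \<bullet> q = 0" "0 < g \<bullet> x" "0 < g \<bullet> y" "0 < g \<bullet> z"
    and "0 < det3 q x y" "0 < det3 q y z"
  shows "0 < det3 q x z"
proof -
  have "det3 q y z * (g \<bullet> x) - det3 q x z * (g \<bullet> y) + det3 q x y * (g \<bullet> z) = 0"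
    using det3_inner_identity[where x = x and y = y and z = z and q = q and g = g] assms(1)
    by (simp add: det3_cycle[where x = q and y = y and z = z]
        det3_cycle[where x = q and y = x and z = z] det3_cycle[where x = q and y = x and z = y])
  then have "det3 q x z * (g \<bullet> y) = det3 q y z * (g \<bullet> x) + det3 q x y * (g \<bullet> z)"
    by linarith
  also have "\<dots> > 0" using assms(2-6) by (simp add: add_pos_pos)
  finally show ?thesis using assms(3) by (simp add: zero_less_mult_iff)
qed

lemma mem_convex_hull_3_det3:
  assumes "0 < det3 q x z" "det3 x y z < 0" "0 < det3 q y z" "0 < det3 q x y"
    and "a \<bullet> q = 1" "a \<bullet> x = 1" "a \<bullet> y = 1" "a \<bullet> z = 1"
  shows "y \<in> convex hull {q, x, z}"
proof -
  define d where "d = det3 q x z"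
  have comb: "d *\<^sub>R y = det3 y x z *\<^sub>R q + det3 q y z *\<^sub>R x + det3 q x y *\<^sub>R z"
    unfolding d_def by (rule det3_cramer)
  then have "a \<bullet> (d *\<^sub>R y) = det3 y x z + det3 q y z + det3 q x y"
    using assms(5-8) by (simp add: inner_add_right)
  then have sum: "det3 y x z / d + det3 q y z / d + det3 q x y / d = 1"
    using assms(1,7) by (simp add: d_def add_divide_distrib[symmetric])
  have "y = (1 / d) *\<^sub>R (d *\<^sub>R y)" using assms(1) by (simp add: d_def)
  also have "\<dots> = (det3 y x z / d) *\<^sub>R q + (det3 q y z / d) *\<^sub>R x + (det3 q x y / d) *\<^sub>R z"
    unfolding comb by (simp add: scaleR_add_right divide_inverse_commute)
  finally have "y = (det3 y x z / d) *\<^sub>R q + (det3 q y z / d) *\<^sub>R x + (det3 q x y / d) *\<^sub>R z" .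
  moreover have "0 \<le> det3 y x z / d" "0 \<le> det3 q y z / d" "0 \<le> det3 q x y / d"
    using assms(1-4) by (simp_all add: d_def det3_swap12[of y x z] divide_nonpos_pos less_imp_le)
  ultimately show ?thesis using sum unfolding convex_hull_3 by blast
qed

lemma separating_line_through_point:
  fixes S :: "'a::euclidean_space set"
  assumes "finite S" "q \<notin> convex hull S" "a \<bullet> q = 1" "\<And>x. x \<in> S \<Longrightarrow> a \<bullet> x = 1"
  shows "\<exists>g. g \<bullet> q = 0 \<and> (\<forall>x\<in>S. 0 < g \<bullet> x)"
proof -
  have "closed (convex hull S)"
    using compact_imp_closed[OF compact_convex_hull[OF finite_imp_compact[OF assms(1)]]] .
  then obtain h \<beta> where h: "h \<bullet> q < \<beta>" "\<And>x. x \<in> convex hull S \<Longrightarrow> \<beta> < h \<bullet> x"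
    using separating_hyperplane_closed_point[OF convex_convex_hull _ assms(2)] by blast
  define g where "g = h - (h \<bullet> q) *\<^sub>R a"
  have "g \<bullet> q = 0" using assms(3) by (simp add: g_def inner_diff_left)
  moreover have "0 < g \<bullet> x" if "x \<in> S" for x
    using h(1) h(2)[OF hull_inc[OF that]] assms(4)[OF that] by (simp add: g_def inner_diff_left)
  ultimately show ?thesis by blast
qed

lemma pencil_sorted_vertices:
  fixes f :: "6 \<Rightarrow> real^3" and i0 :: 6
  assumes aff: "\<And>i. a \<bullet> f i = 1"
    and vertex: "f i0 \<notin> convex hull (f ` (UNIV - {i0}))"
    and det: "\<And>i j k. i \<noteq> j \<Longrightarrow> j \<noteq> k \<Longrightarrow> i \<noteq> k \<Longrightarrow> det3 (f i) (f j) (f k) \<noteq> 0"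
  obtains xs where "set xs = UNIV - {i0}" "distinct xs"
    "sorted_wrt (\<lambda>j k. 0 < det3 (f i0) (f j) (f k)) xs"
proof -
  define U where "U = UNIV - {i0}"
  have "finite (f ` U)" "f i0 \<notin> convex hull (f ` U)" "a \<bullet> f i0 = 1" "\<And>x. x \<in> f ` U \<Longrightarrow> a \<bullet> x = 1"
    using vertex aff by (auto simp: U_def)
  then obtain g where "g \<bullet> f i0 = 0" "\<forall>x \<in> f ` U. 0 < g \<bullet> x"
    using separating_line_through_point by blast
  then have g: "g \<bullet> f i0 = 0" "\<And>j. j \<in> U \<Longrightarrow> 0 < g \<bullet> f j" by auto
  show ?thesis
  proof (rule sorted_list_of_strict_total_order[of U "\<lambda>j k. 0 < det3 (f i0) (f j) (f k)"])
    show "0 < det3 (f i0) (f j) (f m)"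
      if "j \<in> U" "k \<in> U" "m \<in> U" "0 < det3 (f i0) (f j) (f k)" "0 < det3 (f i0) (f k) (f m)"
      for j k m
      using pencil_order_trans[OF g(1) g(2)[OF that(1)] g(2)[OF that(2)] g(2)[OF that(3)]] that(4,5) .
    show "0 < det3 (f i0) (f j) (f k) \<or> 0 < det3 (f i0) (f k) (f j)" if "j \<in> U" "k \<in> U" "j \<noteq> k" for j k
    proof -
      have "det3 (f i0) (f j) (f k) \<noteq> 0" using det[of i0 j k] that by (auto simp: U_def)
      then show ?thesis using det3_swap23[of "f i0" "f j" "f k"] by linarith
    qed
  qed (use that in \<open>auto simp: U_def\<close>)
qed

text \<open>If the middle vertex of three consecutive ones in the pencil order made a negative turn, it
  would lie in the triangle spanned by the other two and the apex f i0.\<close>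
lemma pencil_sorted_triangles:
  fixes f :: "6 \<Rightarrow> real^3" and i0 :: 6
  assumes aff: "\<And>i. a \<bullet> f i = 1"
    and vertex: "\<And>i. f i \<notin> convex hull (f ` (UNIV - {i}))"
    and det: "\<And>i j k. i \<noteq> j \<Longrightarrow> j \<noteq> k \<Longrightarrow> i \<noteq> k \<Longrightarrow> det3 (f i) (f j) (f k) \<noteq> 0"
    and xs: "set xs = UNIV - {i0}" "distinct xs" "sorted_wrt (\<lambda>j k. 0 < det3 (f i0) (f j) (f k)) xs"
    and "m < n" "n < p" "p < length xs"
  shows "0 < det3 (f (xs!m)) (f (xs!n)) (f (xs!p))"
proof (rule ccontr)
  assume neg: "\<not> ?thesis"
  have ne: "xs!m \<noteq> xs!n" "xs!n \<noteq> xs!p" "xs!m \<noteq> xs!p"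
    using xs(2) assms(7-9) by (simp_all add: nth_eq_iff_index_eq)
  then have "det3 (f (xs!m)) (f (xs!n)) (f (xs!p)) < 0"
    using neg det[of "xs!m" "xs!n" "xs!p"] by linarith
  then have "f (xs!n) \<in> convex hull {f i0, f (xs!m), f (xs!p)}"
    using xs(3) assms(7-9) aff
    by (intro mem_convex_hull_3_det3[where a = a]) (simp_all add: sorted_wrt_iff_nth_less)
  moreover have "xs!n \<noteq> i0" using xs(1) assms(8,9) nth_mem by fastforce
  then have "{f i0, f (xs!m), f (xs!p)} \<subseteq> f ` (UNIV - {xs!n})" using ne by auto
  ultimately have "f (xs!n) \<in> convex hull (f ` (UNIV - {xs!n}))" by (meson hull_mono subsetD)
  then show False using vertex by blast
qed

lemma hexagon_positive_reindex:
  fixes f :: "6 \<Rightarrow> real^3" and i0 :: 6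
  assumes aff: "\<And>i. a \<bullet> f i = 1"
    and vertex: "\<And>i. f i \<notin> convex hull (f ` (UNIV - {i}))"
    and det: "\<And>i j k. i \<noteq> j \<Longrightarrow> j \<noteq> k \<Longrightarrow> i \<noteq> k \<Longrightarrow> det3 (f i) (f j) (f k) \<noteq> 0"
  obtains \<sigma> :: "6 \<Rightarrow> 6" where "\<sigma> 0 = i0" "surj \<sigma>" "hexagon_positive (\<chi> l. f (\<sigma> l))"
proof -
  obtain xs where xs: "set xs = UNIV - {i0}" "distinct xs"
    "sorted_wrt (\<lambda>j k. 0 < det3 (f i0) (f j) (f k)) xs"
    using pencil_sorted_vertices[OF aff vertex det] by blast
  have len: "length xs = 5" using distinct_card[OF xs(2)] xs(1) by (simp add: card_Diff_singleton)
  define \<sigma> :: "6 \<Rightarrow> 6" where "\<sigma> l = (if l = 1 then xs!0 else if l = 2 then xs!1 else if l = 3 then xs!2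
      else if l = 4 then xs!3 else if l = 5 then xs!4 else i0)" for l
  have "range \<sigma> = \<sigma> ` {0, 1, 2, 3, 4, 5}" by (simp add: UNIV_6)
  also have "\<dots> = insert i0 (set xs)"
    using len by (simp add: \<sigma>_def set_conv_nth insert_commute less_Suc_eq numeral_eq_Suc) blast
  finally have "surj \<sigma>" using xs(1) by auto
  moreover have "hexagon_positive (\<chi> l. f (\<sigma> l))"
    using pencil_sorted_triangles[OF aff vertex det xs] xs(3) len
    by (simp add: hexagon_positive_def \<sigma>_def sorted_wrt_iff_nth_less det3_cycle[where x = "f i0"])
  moreover have "\<sigma> 0 = i0" by (simp add: \<sigma>_def)
  ultimately show ?thesis using that by blast
qed

lemma quad_scaleR: "quad A (c *\<^sub>R v) = c * c * quad A v"
  by (simp add: quad_def matrix_vector_mult_scaleR)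

lemma outside_conic_scaleR:
  assumes "outside_conic A v" "c \<noteq> 0"
  shows "outside_conic A (c *\<^sub>R v)"
proof -
  define S where "S = sphere (0::real^3) 1 - {w. quad A w = 0}"
  define u where "u = (1 / norm v) *\<^sub>R v"
  have q: "quad A v \<noteq> 0" and antipode: "- u \<in> connected_component_set S u"
    using assms(1) unfolding outside_conic_def Let_def S_def u_def by auto
  have "v \<noteq> 0" using q by (auto simp: quad_def)
  show ?thesis
  proof (cases "c > 0")
    case True
    then have "(1 / norm (c *\<^sub>R v)) *\<^sub>R (c *\<^sub>R v) = u" unfolding u_def by simp
    then show ?thesis
      unfolding outside_conic_def Let_def using quad_scaleR q assms(2) antipode S_def by simp
  next
    case False
    then have "(1 / norm (c *\<^sub>R v)) *\<^sub>R (c *\<^sub>R v) = - u"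
      using assms(2) \<open>v \<noteq> 0\<close> unfolding u_def by (simp add: vec_eq_iff abs_if)
    moreover have "- (- u) \<in> connected_component_set S (- u)"
      using antipode connected_component_sym by (simp add: mem_Collect_eq)
    ultimately show ?thesis
      unfolding outside_conic_def Let_def using quad_scaleR q assms(2) S_def by simp
  qed
qed

lemma cyclic_dominant_hexagon_positive:
  assumes "typical_config P" "cyclic_config P" "dominant P i0"
  obtains Q A where "hexagon_positive Q" "config_points Q = config_points P"
    "proj_class (Q$0) = proj_class (P$i0)" "transpose A = A" "A \<noteq> 0"
    "\<forall>l\<in>{1, 2, 3, 4, 5}. quad A (Q$l) = 0" "outside_conic A (Q$0)"
proof -
  obtain A where A: "transpose A = A" "A \<noteq> 0" "\<And>j. j \<noteq> i0 \<Longrightarrow> quad A (P$j) = 0"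
    "outside_conic A (P$i0)"
    using assms(3) unfolding dominant_def by blast
  obtain a where a: "\<And>i. a \<bullet> P$i \<noteq> 0"
    and hull: "\<And>i. (1 / (a \<bullet> P$i)) *\<^sub>R P$i \<notin>
      convex hull ((\<lambda>j. (1 / (a \<bullet> P$j)) *\<^sub>R P$j) ` (UNIV - {i}))"
    using assms(2) unfolding cyclic_config_def Let_def by blast
  define c where "c i = 1 / (a \<bullet> P$i)" for i
  define f where "f i = c i *\<^sub>R P$i" for i
  have c: "c i \<noteq> 0" for i using a by (simp add: c_def)
  obtain \<sigma> :: "6 \<Rightarrow> 6" where \<sigma>: "\<sigma> 0 = i0" "surj \<sigma>" "hexagon_positive (\<chi> l. f (\<sigma> l))"
  proof (rule hexagon_positive_reindex[of a f])
    show "a \<bullet> f i = 1" for i using a[of i] by (simp add: f_def c_def)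
    show "f i \<notin> convex hull (f ` (UNIV - {i}))" for i using hull[of i] by (simp add: f_def c_def)
    show "det3 (f i) (f j) (f k) \<noteq> 0" if "i \<noteq> j" "j \<noteq> k" "i \<noteq> k" for i j k
      using typical_config_det3[OF assms(1) that] c by (simp add: f_def det3_scaleR)
  qed
  define Q where "Q = (\<chi> l. f (\<sigma> l))"
  have "inj \<sigma>" using \<sigma>(2) by (simp add: finite_UNIV_surj_inj)
  have proj_f: "proj_class (f i) = proj_class (P$i)" for i
    using c by (simp add: f_def proj_class_scaleR)
  have "config_points Q = (\<lambda>i. proj_class (f i)) ` range \<sigma>"
    by (simp add: config_points_def Q_def image_image)
  then have "config_points Q = config_points P"
    using \<sigma>(2) proj_f by (simp add: config_points_def image_image)
  moreover have "quad A (Q$l) = 0" if "l \<noteq> 0" for l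
  proof -
    have "\<sigma> l \<noteq> i0" using \<open>inj \<sigma>\<close> \<sigma>(1) that by (metis injD)
    then show ?thesis using A(3) by (simp add: Q_def f_def quad_scaleR)
  qed
  moreover have "outside_conic A (Q$0)" "proj_class (Q$0) = proj_class (P$i0)"
    using outside_conic_scaleR[OF A(4) c[of i0]] proj_f[of i0] \<sigma>(1) by (simp_all add: Q_def f_def)
  ultimately show ?thesis using that \<sigma>(3) A(1,2) unfolding Q_def by auto
qed

section \<open>Normal form of a hexagon inscribed in a conic\<close>

lemma quad_frame_map_conic:
  assumes "transpose A = A" "quad A a = 0" "quad A b = 0" "quad A c = 0"
  shows "quad A (frame_map a b c z) =
    2 * (z$1 * z$2 * bilin A a b + z$1 * z$3 * bilin A a c + z$2 * z$3 * bilin A b c)"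
  using assms(2-4) bilin_commute[OF assms(1), of b a] bilin_commute[OF assms(1), of c a]
    bilin_commute[OF assms(1), of c b]
  unfolding quad_eq_bilin bilin_frame_map by (simp add: algebra_simps)

text \<open>If the polar of p passed through q, the conic would contain the line pq and hence be a
  line pair, which cannot carry five points in general position.\<close>
lemma bilin_conic_points_nonzero:
  assumes "transpose A = A" "A \<noteq> 0"
    and "quad A p = 0" "quad A q = 0" "quad A r = 0" "quad A s = 0" "quad A u = 0"
    and "det3 p q r \<noteq> 0" "det3 p q s \<noteq> 0" "det3 p q u \<noteq> 0" "det3 r s u \<noteq> 0"
  shows "bilin A p q \<noteq> 0"
proof
  assume pq: "bilin A p q = 0"
  define S where "S = frame_coords p q r s"
  define U where "U = frame_coords p q r u"
  have s: "s = frame_map p q r S" and u: "u = frame_map p q r U"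
    using frame_map_coords[OF assms(8)] by (simp_all add: S_def U_def)
  have r: "r = frame_map p q r e3" by (simp add: frame_map_def e3_def)
  have form: "quad A (frame_map p q r z) = 2 * z$3 * (z$1 * bilin A p r + z$2 * bilin A q r)" for z
    using quad_frame_map_conic[OF assms(1,3,4,5)] pq by (simp add: algebra_simps)
  have "det3 p q s = det3 p q r * S$3" "det3 p q u = det3 p q r * U$3"
    by (subst s u, simp add: det3_frame_map[of p q r e1 e2, simplified] frame_map_def e1_def e2_def
        det3_def algebra_simps)+
  then have "S$3 \<noteq> 0" "U$3 \<noteq> 0" using assms(9,10) by auto
  then have lin: "S$1 * bilin A p r + S$2 * bilin A q r = 0"
    "U$1 * bilin A p r + U$2 * bilin A q r = 0"
    using form[of S] form[of U] assms(6,7) s u by auto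
  have "det3 r s u = det3 p q r * (S$1 * U$2 - S$2 * U$1)"
    by (subst r, subst s, subst u, simp only: det3_frame_map) (simp add: det3_def e3_def)
  then have "S$1 * U$2 - S$2 * U$1 \<noteq> 0" using assms(11) by auto
  moreover have "bilin A p r * (S$1 * U$2 - S$2 * U$1) = 0"
    "bilin A q r * (S$1 * U$2 - S$2 * U$1) = 0"
    using lin by algebra+
  ultimately have "bilin A p r = 0" "bilin A q r = 0" by simp_all
  then have "frame_gram A p q r = 0"
    using pq assms(3-5) bilin_commute[OF assms(1)]
    by (simp add: frame_gram_def vec_eq_iff forall_3 quad_eq_bilin)
  then show False using frame_gram_eq_0 assms(2,8) by blast
qed

text \<open>With \<alpha>, \<gamma> the ratios of the polar pairings, the form becomes a multiple of v1 v3 - v2^2 in the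
  frame \<alpha> q3, q4 - \<alpha> q3 - \<gamma> q2, \<gamma> q2; a common sign change makes this frame positively
  oriented.\<close>
lemma parabola_frame:
  assumes "transpose A = A" "quad A q2 = 0" "quad A q3 = 0" "quad A q4 = 0" "0 < det3 q2 q3 q4"
    and nonzero: "bilin A q2 q3 \<noteq> 0" "bilin A q2 q4 \<noteq> 0" "bilin A q3 q4 \<noteq> 0"
  obtains a b c \<kappa> m2 m3 m4 where "0 < det3 a b c" "\<kappa> \<noteq> 0"
    "\<And>y. quad A (frame_map a b c y) = \<kappa> * (y$1 * y$3 - y$2 * y$2)"
    "q2 = frame_map a b c (m2 *\<^sub>R e3)"
    "q3 = frame_map a b c (m3 *\<^sub>R e1)" "q4 = frame_map a b c (m4 *\<^sub>R parabola_pt 1)"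
proof -
  define \<alpha> where "\<alpha> = bilin A q2 q4 / bilin A q2 q3"
  define \<gamma> where "\<gamma> = bilin A q3 q4 / bilin A q2 q3"
  define \<sigma> :: real where "\<sigma> = (if 0 < \<alpha> * \<gamma> then 1 else -1)"
  have nz: "\<alpha> \<noteq> 0" "\<gamma> \<noteq> 0" "\<sigma> \<noteq> 0" using nonzero by (simp_all add: \<alpha>_def \<gamma>_def \<sigma>_def)
  have \<sigma>: "\<sigma> * \<sigma> = 1" "0 < \<sigma> * (\<alpha> * \<gamma>)"
    using nz by (auto simp: \<sigma>_def mult_less_0_iff not_less le_less)
  define a where "a = (\<sigma> * \<alpha>) *\<^sub>R q3"
  define b where "b = \<sigma> *\<^sub>R (q4 - \<alpha> *\<^sub>R q3 - \<gamma> *\<^sub>R q2)"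
  define c where "c = (\<sigma> * \<gamma>) *\<^sub>R q2"
  have "det3 q3 (q4 - \<alpha> *\<^sub>R q3 - \<gamma> *\<^sub>R q2) q2 = det3 q3 q4 q2"
    by (simp add: det3_diff det3_scaleR)
  then have "det3 a b c = (\<sigma> * \<sigma>) * (\<sigma> * (\<alpha> * \<gamma>)) * det3 q3 q4 q2"
    unfolding a_def b_def c_def det3_scaleR by (simp add: algebra_simps)
  then have "0 < det3 a b c"
    using \<sigma> assms(5) by (simp add: det3_cycle[where x = q2 and y = q3 and z = q4])
  moreover have "2 * (bilin A q2 q4 * bilin A q3 q4 / bilin A q2 q3) \<noteq> 0" using nonzero by simp
  moreover have "quad A (frame_map a b c y) =
      (2 * (bilin A q2 q4 * bilin A q3 q4 / bilin A q2 q3)) * (y$1 * y$3 - y$2 * y$2)" for y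
  proof -
    have "frame_map a b c y =
        frame_map q3 q4 q2 (\<sigma> *\<^sub>R vector [(y$1 - y$2) * \<alpha>, y$2, (y$3 - y$2) * \<gamma>])"
      by (simp add: frame_map_def a_def b_def c_def algebra_simps)
    moreover have "quad A (frame_map q3 q4 q2 v) =
        2 * (v$1 * v$2 * bilin A q3 q4 + v$1 * v$3 * bilin A q2 q3 + v$2 * v$3 * bilin A q2 q4)" for v
      using quad_frame_map_conic[OF assms(1,3,4,2)] bilin_commute[OF assms(1), of q3 q2]
        bilin_commute[OF assms(1), of q4 q2] by simp
    ultimately have "quad A (frame_map a b c y) = 2 * (\<sigma> * \<sigma>) * ((y$1 - y$2) * \<alpha> * y$2 * bilin A q3 q4
        + (y$1 - y$2) * \<alpha> * (y$3 - y$2) * \<gamma> * bilin A q2 q3 + y$2 * (y$3 - y$2) * \<gamma> * bilin A q2 q4)"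
      by (simp add: algebra_simps)
    also have "\<dots> = (2 * (bilin A q2 q4 * bilin A q3 q4 / bilin A q2 q3)) * (y$1 * y$3 - y$2 * y$2)"
      using \<sigma>(1) nonzero(1) by (simp add: \<alpha>_def \<gamma>_def field_simps)
    finally show ?thesis .
  qed
  moreover have "q2 = frame_map a b c ((1 / (\<sigma> * \<gamma>)) *\<^sub>R e3)"
    "q3 = frame_map a b c ((1 / (\<sigma> * \<alpha>)) *\<^sub>R e1)" "q4 = frame_map a b c ((1 / \<sigma>) *\<^sub>R parabola_pt 1)"
    using nz
    by (simp_all add: frame_map_def a_def b_def c_def e1_def e3_def parabola_pt_def algebra_simps)
  ultimately show ?thesis by (rule that)
qed

lemma connected_nonvanishing_sign:
  fixes f :: "'a::topological_space \<Rightarrow> real"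
  assumes "connected T" "continuous_on T f" "\<And>x. x \<in> T \<Longrightarrow> f x \<noteq> 0" "a \<in> T" "b \<in> T"
  shows "0 < f a * f b"
proof (rule ccontr)
  assume "\<not> 0 < f a * f b"
  then have "f a \<le> 0 \<and> 0 \<le> f b \<or> f b \<le> 0 \<and> 0 \<le> f a"
    by (auto simp: zero_less_mult_iff)
  moreover have "connected (f ` T)" using connected_continuous_image assms(1,2) by blast
  ultimately have "0 \<in> f ` T"
    using assms(4,5) unfolding connected_iff_interval by (meson imageI)
  then show False using assms(3) by auto
qed

text \<open>Inside the parabola the first frame coordinate cannot vanish, so it keeps its sign on the
  component of u in the sphere minus the cone of the conic; but it takes opposite signs at u and
  at the antipode -u.\<close>
lemma outside_conic_parabola_frame:
  assumes "det3 a b c \<noteq> 0" "\<kappa> \<noteq> 0"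
    and form: "\<And>y. quad A (frame_map a b c y) = \<kappa> * (y$1 * y$3 - y$2 * y$2)"
    and outside: "outside_conic A (frame_map a b c y)"
  shows "y$1 * y$3 < y$2 * y$2"
proof (rule ccontr)
  assume not_outside: "\<not> ?thesis"
  define v where "v = frame_map a b c y"
  define u where "u = (1 / norm v) *\<^sub>R v"
  define T where "T = connected_component_set (sphere 0 1 - {w. quad A w = 0}) u"
  define k where "k = frame_coords a b c"
  define h where "h x = (k x)$1 * (k x)$3 - (k x)$2 * (k x)$2" for x
  have "quad A v \<noteq> 0" and antipode: "- u \<in> T"
    using outside unfolding outside_conic_def Let_def v_def u_def T_def by auto
  then have "0 < y$1 * y$3 - y$2 * y$2" using not_outside form by (simp add: v_def)
  moreover have "v \<noteq> 0" using \<open>quad A v \<noteq> 0\<close> by (auto simp: quad_def)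
  moreover have "k u = (1 / norm v) *\<^sub>R y"
    using frame_coords_map[OF assms(1)] by (simp add: k_def u_def v_def frame_coords_scaleR)
  ultimately have "0 < h u" by (simp add: h_def algebra_simps divide_strict_right_mono)
  have "u \<in> T" using antipode connected_component_eq_empty connected_component_refl
    unfolding T_def by (metis empty_iff mem_Collect_eq)
  have "connected T" by (simp add: T_def)
  have "continuous_on T k" unfolding k_def by (rule continuous_on_frame_coords)
  then have cont: "continuous_on T (\<lambda>x. (k x)$i)" for i by (rule continuous_on_component)
  have "continuous_on T h" unfolding h_def by (intro continuous_intros cont)
  moreover have "h x \<noteq> 0" if "x \<in> T" for x
    using that connected_component_subset form[of "k x"] frame_map_coords[OF assms(1)]
    unfolding T_def k_def h_def by fastforce
  ultimately have "0 < h u * h x" if "x \<in> T" for x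
    using connected_nonvanishing_sign[OF \<open>connected T\<close>] \<open>u \<in> T\<close> that by blast
  then have h_pos: "0 < h x" if "x \<in> T" for x using that \<open>0 < h u\<close> zero_less_mult_pos by blast
  have "(k x)$1 \<noteq> 0" if "x \<in> T" for x using h_pos[OF that] by (auto simp: h_def)
  then have "0 < (k u)$1 * (k (- u))$1"
    using connected_nonvanishing_sign[OF \<open>connected T\<close> cont] \<open>u \<in> T\<close> antipode by blast
  moreover have "k (- u) = - k u" using frame_coords_scaleR[of a b c "-1" u] by (simp add: k_def)
  ultimately show False by (simp add: mult_less_0_iff zero_less_mult_iff)
qed

lemma conic_hexagon_signs:
  fixes m1 m2 m3 m4 m5 s t :: real
  assumes b1: "0 < m1 * m2 * m3 * t" and b2: "0 < m1 * m2 * m4 * (t - 1)"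
    and b3: "0 < m1 * m2 * m5 * (t - s)" and b4: "0 < m1 * m3 * m4 * (t * (t - 1))"
    and b6: "0 < m1 * m4 * m5 * ((t - 1) * (t - s) * (s - 1))"
    and b7: "0 < m2 * m3 * m4" and b8: "0 < m2 * m3 * m5 * s" and b9: "0 < m2 * m4 * m5 * (s - 1)"
    and b10: "0 < m3 * m4 * m5 * (s * (s - 1))"
  shows "0 < m1 \<and> 0 < m2 \<and> 0 < m3 \<and> 0 < m4 \<and> 0 < m5 \<and> 1 < s \<and> s < t"
proof -
  have "0 < (m1 * m2 * m3 * t) * (m1 * m2 * m5 * (t - s)) * (m1 * m3 * m4 * (t * (t - 1)))
      * (m1 * m4 * m5 * ((t - 1) * (t - s) * (s - 1)))"
    using b1 b3 b4 b6 by simp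
  also have "\<dots> = (m1 * m1 * m2 * m3 * m4 * m5 * t * (t - 1) * (t - s))\<^sup>2 * (s - 1)"
    by (simp add: power2_eq_square algebra_simps)
  finally have s: "1 < s" by (simp add: zero_less_mult_iff)
  have "0 < (m2 * m3 * m4) * (m2 * m3 * m5 * s)" "0 < (m2 * m3 * m4) * (m2 * m4 * m5 * (s - 1))"
    using b7 b8 b9 by simp_all
  then have "0 < (m2 * m3)\<^sup>2 * (m4 * m5 * s)" "0 < (m2 * m4)\<^sup>2 * (m3 * m5 * (s - 1))"
    by (simp_all add: power2_eq_square algebra_simps)
  then have "0 < m4 * m5" "0 < m3 * m5"
    using s by (auto simp: zero_less_mult_iff)
  moreover have "0 < m3 * m4 * m5" using b10 s zero_less_mult_pos2 by force
  ultimately have "0 < (m3 * m4 * m5) * (m3 * m5)" by simp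
  then have "0 < (m3 * m5)\<^sup>2 * m4" by (simp add: power2_eq_square algebra_simps)
  then have "0 < m4" by (simp add: zero_less_mult_iff)
  then have m: "0 < m2" "0 < m3" "0 < m4" "0 < m5"
    using \<open>0 < m4 * m5\<close> \<open>0 < m3 * m5\<close> b7 by (auto simp: zero_less_mult_iff)
  have "0 < (m1 * m2 * m4 * (t - 1)) * (m1 * m3 * m4 * (t * (t - 1)))" using b2 b4 by simp
  then have "0 < (m1 * m4 * (t - 1))\<^sup>2 * (m2 * m3 * t)" by (simp add: power2_eq_square algebra_simps)
  then have "0 < t" using m by (auto simp: zero_less_mult_iff mult_less_0_iff)
  then have "0 < m1" using b1 m by (simp add: zero_less_mult_iff)
  moreover have "0 < m1 * m2 * m4" "0 < m1 * m2 * m5" using calculation m by simp_all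
  then have "0 < t - 1" "0 < t - s" using b2 b3 zero_less_mult_pos by blast+
  ultimately show ?thesis using s m by simp
qed

lemma det3_parabola_outer:
  "det3 (parabola_pt t) e3 w = t * w$1 - w$2" "det3 e3 (parabola_pt s) w = w$2 - s * w$1"
  "det3 (parabola_pt 1) (parabola_pt s) w = (s - 1) * (w$3 - (1 + s) * w$2 + s * w$1)"
  by (simp_all add: det3_def parabola_pt_def e3_def power2_eq_square algebra_simps)

lemma parabola_point_eq:
  assumes "v$2 * v$2 = v$1 * v$3" "det3 v e3 z \<noteq> 0"
  shows "v = v$1 *\<^sub>R parabola_pt (v$2 / v$1)"
proof -
  have "v$1 \<noteq> 0"
  proof
    assume "v$1 = 0"
    then have "v = v$3 *\<^sub>R e3" using assms(1) by (simp add: vec_eq_iff forall_3 e3_def)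
    then have "det3 v e3 z = v$3 * det3 e3 e3 z" using det3_scaleR(1) by metis
    then show False using assms(2) by simp
  qed
  then show ?thesis
    using assms(1) by (simp add: vec_eq_iff forall_3 parabola_pt_def power2_eq_square field_simps)
qed

lemma outer_point_params:
  fixes m1 m2 m4 m5 s t :: real and w :: "real^3"
  assumes "0 < m1" "0 < m2" "0 < m4" "0 < m5" "1 < s" "s < t"
    and "0 < m1 * m2 * (t * w$1 - w$2)" "0 < m2 * m5 * (w$2 - s * w$1)"
    and "0 < m4 * m5 * ((s - 1) * (w$3 - (1 + s) * w$2 + s * w$1))"
    and outside: "w$1 * w$3 < w$2 * w$2"
  obtains x \<rho> where "std_params s t x \<rho>" "w = w$1 *\<^sub>R vector [1, x, x^2 - \<rho> * ((x - 1) * (x - s))]"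
    "w$1 \<noteq> 0"
proof -
  have "0 < t * w$1 - w$2" "0 < w$2 - s * w$1" "0 < (s - 1) * (w$3 - (1 + s) * w$2 + s * w$1)"
    using zero_less_mult_pos[OF assms(7)] zero_less_mult_pos[OF assms(8)]
      zero_less_mult_pos[OF assms(9)] assms(1-4) by simp_all
  then have "0 < w$3 - (1 + s) * w$2 + s * w$1" using zero_less_mult_pos assms(5) by force
  have "0 < (t - s) * w$1"
    using \<open>0 < t * w$1 - w$2\<close> \<open>0 < w$2 - s * w$1\<close> by (simp add: algebra_simps)
  then have w1: "0 < w$1" using assms(6) by (simp add: zero_less_mult_iff)
  define x where "x = w$2 / w$1"
  define D where "D = x^2 - w$3 / w$1"
  have w: "w$2 = w$1 * x" "w$3 = w$1 * (x^2 - D)" using w1 by (simp_all add: x_def D_def)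
  have x: "s < x" "x < t"
    using \<open>0 < t * w$1 - w$2\<close> \<open>0 < w$2 - s * w$1\<close> w1 unfolding w(1)
    by (simp_all add: algebra_simps mult_less_cancel_left_pos)
  have "0 < w$1 * ((x - 1) * (x - s) - D)"
    using \<open>0 < w$3 - (1 + s) * w$2 + s * w$1\<close> unfolding w by (simp add: power2_eq_square algebra_simps)
  then have D_less: "D < (x - 1) * (x - s)" using w1 by (simp add: zero_less_mult_iff)
  have "0 < w$1 * w$1 * D" using outside unfolding w by (simp add: power2_eq_square algebra_simps)
  then have "0 < D" using w1 by (simp add: zero_less_mult_iff)
  have pos: "0 < (x - 1) * (x - s)" using x assms(5) by simp
  define \<rho> where "\<rho> = D / ((x - 1) * (x - s))"
  have "std_params s t x \<rho>"
    using assms(5) x \<open>0 < D\<close> D_less pos by (simp add: std_params_def \<rho>_def)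
  moreover have "\<rho> * ((x - 1) * (x - s)) = D" using x assms(5) by (simp add: \<rho>_def)
  then have "w = w$1 *\<^sub>R vector [1, x, x^2 - \<rho> * ((x - 1) * (x - s))]"
    using w by (simp add: vec_eq_iff forall_3)
  ultimately show ?thesis using that w1 by simp
qed

lemma hexagon_positive_std_form:
  assumes hex: "hexagon_positive Y"
    and Y2: "Y$2 = m2 *\<^sub>R e3" and Y3: "Y$3 = m3 *\<^sub>R e1" and Y4: "Y$4 = m4 *\<^sub>R parabola_pt 1"
    and on1: "(Y$1)$2 * (Y$1)$2 = (Y$1)$1 * (Y$1)$3"
    and on5: "(Y$5)$2 * (Y$5)$2 = (Y$5)$1 * (Y$5)$3"
    and outside: "(Y$0)$1 * (Y$0)$3 < (Y$0)$2 * (Y$0)$2"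
  obtains s t x \<rho> where "std_params s t x \<rho>"
    "\<forall>l. \<exists>m. m \<noteq> 0 \<and> Y$l = m *\<^sub>R std_config s t x \<rho> $ l"
proof -
  note hexY = hex[unfolded hexagon_positive_def, simplified]
  have "0 < det3 (Y$1) (Y$2) (Y$3)" "0 < det3 (Y$5) (Y$2) (Y$3)"
    using hexY by (simp_all add: det3_cycle[where x = "Y$5" and y = "Y$2" and z = "Y$3", symmetric])
  then have "det3 (Y$1) e3 (Y$3) \<noteq> 0" "det3 (Y$5) e3 (Y$3) \<noteq> 0" by (auto simp: Y2 det3_scaleR)
  define m1 where "m1 = (Y$1)$1"
  define t where "t = (Y$1)$2 / (Y$1)$1"
  define m5 where "m5 = (Y$5)$1"
  define s where "s = (Y$5)$2 / (Y$5)$1"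
  have Y1: "Y$1 = m1 *\<^sub>R parabola_pt t" and Y5: "Y$5 = m5 *\<^sub>R parabola_pt s"
    using parabola_point_eq[OF on1] parabola_point_eq[OF on5] \<open>det3 (Y$1) e3 (Y$3) \<noteq> 0\<close>
      \<open>det3 (Y$5) e3 (Y$3) \<noteq> 0\<close>
    unfolding m1_def t_def m5_def s_def by blast+
  have signs: "0 < m1 \<and> 0 < m2 \<and> 0 < m3 \<and> 0 < m4 \<and> 0 < m5 \<and> 1 < s \<and> s < t"
    by (rule conic_hexagon_signs)
      (use hexY in \<open>simp_all add: Y1 Y2 Y3 Y4 Y5 det3_scaleR det3_parabola_points mult_ac\<close>)
  obtain x \<rho> where x\<rho>: "std_params s t x \<rho>"
    "Y$0 = (Y$0)$1 *\<^sub>R vector [1, x, x^2 - \<rho> * ((x - 1) * (x - s))]" "(Y$0)$1 \<noteq> 0"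
    by (rule outer_point_params[of m1 m2 m4 m5 s t "Y$0"])
      (use signs hexY outside in \<open>simp_all add: Y1 Y2 Y4 Y5 det3_scaleR det3_parabola_outer mult_ac\<close>)
  have Y0: "Y$0 = (Y$0)$1 *\<^sub>R std_config s t x \<rho> $ 0" unfolding std_config_nth by (rule x\<rho>(2))
  have "\<forall>l. \<exists>m. m \<noteq> 0 \<and> Y$l = m *\<^sub>R std_config s t x \<rho> $ l"
    unfolding forall_6
  proof (intro conjI)
    show "\<exists>m. m \<noteq> 0 \<and> Y$0 = m *\<^sub>R std_config s t x \<rho> $ 0" using Y0 x\<rho>(3) by blast
    show "\<exists>m. m \<noteq> 0 \<and> Y$1 = m *\<^sub>R std_config s t x \<rho> $ 1"
      using signs by (intro exI[of _ m1]) (simp add: Y1)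
    show "\<exists>m. m \<noteq> 0 \<and> Y$2 = m *\<^sub>R std_config s t x \<rho> $ 2"
      using signs by (intro exI[of _ m2]) (simp add: Y2)
    show "\<exists>m. m \<noteq> 0 \<and> Y$3 = m *\<^sub>R std_config s t x \<rho> $ 3"
      using signs by (intro exI[of _ m3]) (simp add: Y3)
    show "\<exists>m. m \<noteq> 0 \<and> Y$4 = m *\<^sub>R std_config s t x \<rho> $ 4"
      using signs by (intro exI[of _ m4]) (simp add: Y4)
    show "\<exists>m. m \<noteq> 0 \<and> Y$5 = m *\<^sub>R std_config s t x \<rho> $ 5"
      using signs by (intro exI[of _ m5]) (simp add: Y5)
  qed
  then show ?thesis using that x\<rho>(1) by blast
qed

lemma hexagon_parabola_frame:
  assumes hex: "hexagon_positive Q" and A: "transpose A = A" "A \<noteq> 0"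
    and conic: "\<forall>l\<in>{1, 2, 3, 4, 5}. quad A (Q$l) = 0"
  obtains a b c \<kappa> m2 m3 m4 where "0 < det3 a b c" "\<kappa> \<noteq> 0"
    "\<And>y. quad A (frame_map a b c y) = \<kappa> * (y$1 * y$3 - y$2 * y$2)"
    "Q$2 = frame_map a b c (m2 *\<^sub>R e3)" "Q$3 = frame_map a b c (m3 *\<^sub>R e1)"
    "Q$4 = frame_map a b c (m4 *\<^sub>R parabola_pt 1)"
proof -
  have det: "det3 (Q$i) (Q$j) (Q$k) \<noteq> 0" if "i \<noteq> j" "j \<noteq> k" "i \<noteq> k" for i j k
    using hexagon_positive_det3_nonzero[OF hex that] .
  have z: "quad A (Q$1) = 0" "quad A (Q$2) = 0" "quad A (Q$3) = 0" "quad A (Q$4) = 0"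
    "quad A (Q$5) = 0" using conic by simp_all
  have "bilin A (Q$2) (Q$3) \<noteq> 0" "bilin A (Q$2) (Q$4) \<noteq> 0" "bilin A (Q$3) (Q$4) \<noteq> 0"
    using bilin_conic_points_nonzero[OF A, of "Q$2" "Q$3" "Q$4" "Q$1" "Q$5"]
      bilin_conic_points_nonzero[OF A, of "Q$2" "Q$4" "Q$3" "Q$1" "Q$5"]
      bilin_conic_points_nonzero[OF A, of "Q$3" "Q$4" "Q$2" "Q$1" "Q$5"]
    by (simp_all add: z det)
  moreover have "0 < det3 (Q$2) (Q$3) (Q$4)" using hex by (simp add: hexagon_positive_def)
  ultimately show ?thesis using parabola_frame[OF A(1) z(2-4)] that by blast
qed

lemma hexagon_positive_normal_form:
  assumes hex: "hexagon_positive Q" and A: "transpose A = A" "A \<noteq> 0"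
    and conic: "\<forall>l\<in>{1, 2, 3, 4, 5}. quad A (Q$l) = 0" and outside: "outside_conic A (Q$0)"
  obtains a b c s t x \<rho> where "0 < det3 a b c" "std_params s t x \<rho>"
    "\<forall>l. proj_class (Q$l) = proj_class (frame_config a b c (std_config s t x \<rho>) $ l)"
proof -
  obtain a b c \<kappa> m2 m3 m4 where frame: "0 < det3 a b c" "\<kappa> \<noteq> 0"
    "\<And>y. quad A (frame_map a b c y) = \<kappa> * (y$1 * y$3 - y$2 * y$2)"
    "Q$2 = frame_map a b c (m2 *\<^sub>R e3)" "Q$3 = frame_map a b c (m3 *\<^sub>R e1)"
    "Q$4 = frame_map a b c (m4 *\<^sub>R parabola_pt 1)"
    using hexagon_parabola_frame[OF hex A conic] by blast
  have det_nz: "det3 a b c \<noteq> 0" using frame(1) by simp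
  define Y where "Y = (\<chi> l. frame_coords a b c (Q$l))"
  have QY: "Q$l = frame_map a b c (Y$l)" for l by (simp add: Y_def frame_map_coords[OF det_nz])
  have "hexagon_positive Y"
    using hex frame(1)
    by (simp add: hexagon_positive_def QY[of 0] QY[of 1] QY[of 2] QY[of 3] QY[of 4] QY[of 5]
        det3_frame_map zero_less_mult_iff)
  moreover have "Y$2 = m2 *\<^sub>R e3" "Y$3 = m3 *\<^sub>R e1" "Y$4 = m4 *\<^sub>R parabola_pt 1"
    by (simp_all add: Y_def frame(4-6) frame_coords_map[OF det_nz])
  moreover have "(Y$1)$2 * (Y$1)$2 = (Y$1)$1 * (Y$1)$3" "(Y$5)$2 * (Y$5)$2 = (Y$5)$1 * (Y$5)$3"
    using frame(2) frame(3)[of "Y$1"] frame(3)[of "Y$5"] conic by (simp_all add: QY[symmetric])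
  moreover have "(Y$0)$1 * (Y$0)$3 < (Y$0)$2 * (Y$0)$2"
    using outside_conic_parabola_frame[OF det_nz frame(2,3)] outside by (simp add: QY[symmetric])
  ultimately obtain s t x \<rho> where std: "std_params s t x \<rho>"
    "\<forall>l. \<exists>m. m \<noteq> 0 \<and> Y$l = m *\<^sub>R std_config s t x \<rho> $ l"
    by (rule hexagon_positive_std_form)
  have "\<forall>l. proj_class (Q$l) = proj_class (frame_config a b c (std_config s t x \<rho>) $ l)"
  proof
    fix l
    obtain m where "m \<noteq> 0" "Y$l = m *\<^sub>R std_config s t x \<rho> $ l" using std(2) by blast
    then show "proj_class (Q$l) = proj_class (frame_config a b c (std_config s t x \<rho>) $ l)"
      by (simp add: QY frame_config_def frame_map_scaleR proj_class_scaleR)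
  qed
  then show ?thesis using that frame(1) std(1) by blast
qed

lemma config_points_cong:
  "(\<And>l. proj_class (P$l) = proj_class (Q$l)) \<Longrightarrow> config_points P = config_points Q"
  by (simp add: config_points_def image_image)

lemma cyclic_dominant_connected_std_config:
  assumes "typical_config P" "cyclic_config P" "dominant P i"
  obtains Q s t x \<rho> where "std_params s t x \<rho>"
    "path_component {P. typical_config P} Q (std_config s t x \<rho>)"
    "config_points Q = config_points P" "proj_class (Q$0) = proj_class (P$i)"
proof -
  obtain Q A where Q: "hexagon_positive Q" "config_points Q = config_points P"
    "proj_class (Q$0) = proj_class (P$i)" "transpose A = A" "A \<noteq> 0"
    "\<forall>l\<in>{1, 2, 3, 4, 5}. quad A (Q$l) = 0" "outside_conic A (Q$0)"
    by (rule cyclic_dominant_hexagon_positive[OF assms])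
  obtain a b c s t x \<rho> where N: "0 < det3 a b c" "std_params s t x \<rho>"
    "\<forall>l. proj_class (Q$l) = proj_class (frame_config a b c (std_config s t x \<rho>) $ l)"
    by (rule hexagon_positive_normal_form[OF Q(1,4-7)])
  let ?Q = "frame_config a b c (std_config s t x \<rho>)"
  have "path_component {P. typical_config P} ?Q (std_config s t x \<rho>)"
    using typical_frame_config_connected[OF N(1) typical_std_config[OF N(2)]] .
  moreover have "config_points ?Q = config_points P"
    using config_points_cong[of Q ?Q] N(3) Q(2) by simp
  moreover have "proj_class (?Q$0) = proj_class (P$i)" using N(3) Q(3) by simp
  ultimately show ?thesis using that N(2) by blast
qed

theorem lemma2p2:
  fixes P0 P1 :: config and i0 i1 :: 6
  assumes "typical_config P0" and "cyclic_config P0"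
    and "typical_config P1" and "cyclic_config P1"
    and "dominant P0 i0" and "dominant P1 i1"
  shows "\<exists>\<gamma> :: real \<Rightarrow> config.
           continuous_on {0..1} \<gamma> \<and>
           (\<forall>t\<in>{0..1}. typical_config (\<gamma> t)) \<and>
           config_points (\<gamma> 0) = config_points P0 \<and>
           config_points (\<gamma> 1) = config_points P1 \<and>
           (\<exists>k. proj_class (\<gamma> 0 $ k) = proj_class (P0 $ i0) \<and>
                proj_class (\<gamma> 1 $ k) = proj_class (P1 $ i1))"
proof -
  obtain Q0 s t x \<rho> where Q0: "std_params s t x \<rho>"
    "path_component {P. typical_config P} Q0 (std_config s t x \<rho>)"
    "config_points Q0 = config_points P0" "proj_class (Q0$0) = proj_class (P0$i0)"
    by (rule cyclic_dominant_connected_std_config[OF assms(1,2,5)])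
  obtain Q1 s' t' x' \<rho>' where Q1: "std_params s' t' x' \<rho>'"
    "path_component {P. typical_config P} Q1 (std_config s' t' x' \<rho>')"
    "config_points Q1 = config_points P1" "proj_class (Q1$0) = proj_class (P1$i1)"
    by (rule cyclic_dominant_connected_std_config[OF assms(3,4,6)])
  have "path_component {P. typical_config P} Q0 Q1"
    using Q0(2) std_configs_connected[OF Q0(1) Q1(1)] path_component_sym[OF Q1(2)]
    by (blast intro: path_component_trans)
  then obtain \<gamma> where "path \<gamma>" "path_image \<gamma> \<subseteq> {P. typical_config P}"
    "pathstart \<gamma> = Q0" "pathfinish \<gamma> = Q1"
    unfolding path_component_def by blast
  then show ?thesis
    using Q0(3,4) Q1(3,4) unfolding path_def path_image_def pathstart_def pathfinish_def by blast
qed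

end
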